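(* Consider the dynamical system, trajectory space $\mathcal{S}$, charts $\Phi_t$ and models $\mathfrak{p}_t$ described in the context, with $f(\cdot,u_t)$ a diffeomorphism of $\mathbb{R}^{\dim(s)}$ for every $t$. Fix an initial state $s_0$, inputs $(u_t)_{t\ge1}$ and observations $(y_t)_{t\ge1}$. Let $s_t$ be the state estimated at time $t$ by the pure fading-memory extended Kalman filter with weights $(\alpha_t)$, observations $(y_t)$, initial state $s_0$ and initial covariance $P_0$ (symmetric positive definite). Let $\mathbf{s}^t\in\mathcal{S}$ be the trajectory estimated after $t$ steps of the online natural gradient in charts for the models $\mathfrak{p}_t$ in the charts $\Phi_t$, initialized at the trajectory $\mathbf{s}^0$ with $\mathbf{s}^0_0=s_0$, and with initial metric whose matrix in chart $\Phi_0$ is $J_0$ (symmetric positive definite). Assume the hyperparameters are related by $$P_0=\eta_0 J_0^{-1},\qquad \gamma_t=\eta_t,\qquad \frac1{\eta_t}=\frac{1}{1+\alpha_t}\,\frac1{\eta_{t-1}}+1\quad (t\ge1).$$ Then for all $t\ge0$, $\Phi_t(\mathbf{s}^t)=\mathbf{s}^t_t=s_t$, and $P_t=\eta_t J_t^{-1}$, where $J_t$ is the matrix of the metric tensor $\mathcal{J}_t$ in the chart $\Phi_t$.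
   Context: Conventions: for $y=f(x)$, $\partial y/\partial x$ is the Jacobian with $(i,j)$ entry $\partial f_i/\partial x_j$; gradients of real functions are row vectors; for a column vector $v$, $v^{\otimes2}=vv^\top$, and for a row vector $v$, $v^{\otimes 2}=v^\top v$. Exponential family: $p_{\mathrm{obs}}(y\mid\hat y)$ denotes a family of densities $\frac{1}{Z(\beta)}\exp(\sum_k\beta_kT_k(y))\lambda(dy)$ (reference measure $\lambda$, linearly independent sufficient statistics $T=(T_1,\dots,T_K)$, also independent from constants), parameterized by its mean parameter $\hat y=\mathbb{E}[T(y)]\in\mathbb{R}^K$ (e.g. $\mathcal N(\hat y,R)$ with fixed $R$). Dynamical system: states $s_t\in\mathbb{R}^{\dim(s)}$, inputs $u_t$, smooth $f$ with $s_t=f(s_{t-1},u_t)$; smooth $h$ with predictions $\hat y_t=h(s_t,u_t)$; observations $y_t\sim p_{\mathrm{obs}}(y\mid\hat y_t)$. $\mathcal S$ is the set of sequences $\mathbf{s}=(s_t)_{t\ge0}$ with $s_t=f(s_{t-1},u_t)$ for all $t\ge1$; $\Phi_t:\mathcal S\to\mathbb{R}^{\dim(s)}$, $\Phi_t(\mathbf{s})=s_t$ (a chart on the manifold $\mathcal S$); $\mathfrak{p}_t(y\mid\mathbf{s}):=p_{\mathrm{obs}}(y\mid h(\Phi_t(\mathbf{s}),u_t))$. Online natural gradient in charts: on a smooth manifold $\Theta$ with models $\mathfrak p_t(y\mid\vartheta)$ and charts $\Phi_t:\Theta\to\mathbb{R}^{\dim\Theta}$ (for a tensor $g$, $\mathbf{T}\Phi(g)$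 is its coordinate expression in chart $\Phi$, and $\mathbf T_\vartheta\Phi^{-1}$ the inverse operation at $\vartheta$), the algorithm maintains $\vartheta_t\in\Theta$ and a $(0,2)$-tensor $\mathcal J_t$ at $\vartheta_t$, updated for $t\ge1$ with learning rate $\eta_t$ and decay rate $\gamma_t$ by: $\theta\leftarrow\Phi_t(\vartheta_{t-1})$, $J\leftarrow\mathbf T\Phi_t(\mathcal J_{t-1})$; $J_t\leftarrow(1-\gamma_t)J+\gamma_t\mathbf T\Phi_t\big(\mathbb E_{y\sim\mathfrak p_t(\cdot\mid\vartheta_{t-1})}[(\partial\ln\mathfrak p_t(y\mid\vartheta)/\partial\vartheta|_{\vartheta_{t-1}})^{\otimes2}]\big)$; $\theta_t\leftarrow\theta+\eta_tJ_t^{-1}\mathbf T\Phi_t(\partial\ln\mathfrak p_t(y_t\mid\vartheta)/\partial\vartheta|_{\vartheta_{t-1}})^\top$; $\vartheta_t\leftarrow\Phi_t^{-1}(\theta_t)$, $\mathcal J_t\leftarrow\mathbf T_{\vartheta_t}\Phi_t^{-1}(J_t)$. Here $\vartheta_t=\mathbf s^t$. Extended Kalman filter (with exponential-family observations): maintains $s_t$ and covariance $P_t$, starting from $(s_0,P_0)$; for $t\ge1$: $s_{t|t-1}=f(s_{t-1},u_t)$, $F_{t-1}=\partial f/\partial s|_{(s_{t-1},u_t)}$, $P_{t|t-1}=F_{t-1}P_{t-1}F_{t-1}^\top+Q_t$, $\hat y_t=h(s_{t|t-1},u_t)$, $E_t=T(y_t)-\hat y_t$, $R_t=\mathrm{Cov}_{y\sim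 p_{\mathrm{obs}}(\cdot\mid\hat y_t)}(T(y))$, $H_t=\partial h/\partial s|_{(s_{t|t-1},u_t)}$, $K_t=P_{t|t-1}H_t^\top(H_tP_{t|t-1}H_t^\top+R_t)^{-1}$, $P_t=(\mathrm{Id}-K_tH_t)P_{t|t-1}$, $s_t=s_{t|t-1}+K_tE_t$. The pure fading-memory filter with weights $\alpha_t\ge0$ takes $Q_t=\alpha_tF_{t-1}P_{t-1}F_{t-1}^\top$, i.e. $P_{t|t-1}=(1+\alpha_t)F_{t-1}P_{t-1}F_{t-1}^\top$. *)

theory Defs
  imports "HOL-Analysis.Analysis"
begin

fun iter_dd :: "('a::real_normed_vector \<Rightarrow> 'b::real_normed_vector) \<Rightarrow> 'a list \<Rightarrow> 'a \<Rightarrow> 'b" where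
  "iter_dd g [] = g"
| "iter_dd g (v # vs) = (\<lambda>x. frechet_derivative (iter_dd g vs) (at x) v)"

definition smooth_map :: "('a::euclidean_space \<Rightarrow> 'b::real_normed_vector) \<Rightarrow> bool" where
  "smooth_map g \<longleftrightarrow> (\<forall>vs x. iter_dd g vs differentiable (at x))"

definition diffeo :: "('a::euclidean_space \<Rightarrow> 'a) \<Rightarrow> bool" where
  "diffeo g \<longleftrightarrow> bij g \<and> smooth_map g \<and> smooth_map (inv g)"

text \<open>Jacobian matrix, (i,j) entry = d g_i / d x_j.\<close>
definition jac :: "(real^'n \<Rightarrow> real^'m) \<Rightarrow> real^'n \<Rightarrow> real^'n^'m" where
  "jac g x = matrix (frechet_derivative g (at x))"

definition sym_pos_def :: "real^'n^'n \<Rightarrow> bool" where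
  "sym_pos_def M \<longleftrightarrow> transpose M = M \<and> (\<forall>x. x \<noteq> 0 \<longrightarrow> x \<bullet> (M *v x) > 0)"

text \<open>Reference measure lam on the observation space, sufficient statistics T.\<close>

definition expfam_stats :: "'y measure \<Rightarrow> ('y \<Rightarrow> real^'k) \<Rightarrow> bool" where
  "expfam_stats lam T \<longleftrightarrow> T \<in> borel_measurable lam \<and>
     (\<forall>(c::real^'k) (d::real). (AE y in lam. c \<bullet> T y = d) \<longrightarrow> c = 0 \<and> d = 0)"

definition nat_space :: "'y measure \<Rightarrow> ('y \<Rightarrow> real^'k) \<Rightarrow> (real^'k) set" where
  "nat_space lam T = {\<beta>. integrable lam (\<lambda>y. exp (\<beta> \<bullet> T y))}"

definition Zf :: "'y measure \<Rightarrow> ('y \<Rightarrow> real^'k) \<Rightarrow> real^'k \<Rightarrow> real" where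
  "Zf lam T \<beta> = (\<integral>y. exp (\<beta> \<bullet> T y) \<partial>lam)"

definition dens :: "'y measure \<Rightarrow> ('y \<Rightarrow> real^'k) \<Rightarrow> real^'k \<Rightarrow> 'y \<Rightarrow> real" where
  "dens lam T \<beta> y = exp (\<beta> \<bullet> T y) / Zf lam T \<beta>"

definition meanT :: "'y measure \<Rightarrow> ('y \<Rightarrow> real^'k) \<Rightarrow> real^'k \<Rightarrow> real^'k" where
  "meanT lam T \<beta> = (\<integral>y. dens lam T \<beta> y *\<^sub>R T y \<partial>lam)"

definition mean_dom :: "'y measure \<Rightarrow> ('y \<Rightarrow> real^'k) \<Rightarrow> (real^'k) set" where
  "mean_dom lam T = meanT lam T ` interior (nat_space lam T)"

definition natpar :: "'y measure \<Rightarrow> ('y \<Rightarrow> real^'k) \<Rightarrow> real^'k \<Rightarrow> real^'k" where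
  "natpar lam T yh = (THE \<beta>. \<beta> \<in> interior (nat_space lam T) \<and> meanT lam T \<beta> = yh)"

definition pobs :: "'y measure \<Rightarrow> ('y \<Rightarrow> real^'k) \<Rightarrow> real^'k \<Rightarrow> 'y \<Rightarrow> real" where
  "pobs lam T yh y = dens lam T (natpar lam T yh) y"

definition covT :: "'y measure \<Rightarrow> ('y \<Rightarrow> real^'k) \<Rightarrow> real^'k \<Rightarrow> real^'k^'k" where
  "covT lam T yh = (\<chi> i j. \<integral>y. (T y $ i - yh $ i) * (T y $ j - yh $ j) * pobs lam T yh y \<partial>lam)"

fun ekf :: "(real^'n \<Rightarrow> 'u \<Rightarrow> real^'n) \<Rightarrow> (real^'n \<Rightarrow> 'u \<Rightarrow> real^'k) \<Rightarrow> (nat \<Rightarrow> 'u)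
    \<Rightarrow> 'y measure \<Rightarrow> ('y \<Rightarrow> real^'k) \<Rightarrow> (nat \<Rightarrow> 'y) \<Rightarrow> (nat \<Rightarrow> real)
    \<Rightarrow> real^'n \<Rightarrow> real^'n^'n \<Rightarrow> nat \<Rightarrow> (real^'n) \<times> (real^'n^'n)" where
  "ekf f h u lam T y \<alpha> s0 P0 0 = (s0, P0)"
| "ekf f h u lam T y \<alpha> s0 P0 (Suc t) =
    (let (s, P) = ekf f h u lam T y \<alpha> s0 P0 t;
         spred = f s (u (Suc t));
         F = jac (\<lambda>x. f x (u (Suc t))) s;
         Q = \<alpha> (Suc t) *\<^sub>R (F ** P ** transpose F);
         Ppred = F ** P ** transpose F + Q;
         yh = h spred (u (Suc t));
         E = T (y (Suc t)) - yh;
         R = covT lam T yh;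
         H = jac (\<lambda>x. h x (u (Suc t))) spred;
         K = Ppred ** transpose H ** matrix_inv (H ** Ppred ** transpose H + R);
         Pn = (mat 1 - K ** H) ** Ppred;
         sn = spred + K *v E
     in (sn, Pn))"

definition traj :: "(real^'n \<Rightarrow> 'u \<Rightarrow> real^'n) \<Rightarrow> (nat \<Rightarrow> 'u) \<Rightarrow> (nat \<Rightarrow> real^'n) set" where
  "traj f u = {ss. \<forall>t. ss (Suc t) = f (ss t) (u (Suc t))}"

definition Phi :: "nat \<Rightarrow> (nat \<Rightarrow> real^'n) \<Rightarrow> real^'n" where
  "Phi t ss = ss t"

definition Phi_inv :: "(real^'n \<Rightarrow> 'u \<Rightarrow> real^'n) \<Rightarrow> (nat \<Rightarrow> 'u) \<Rightarrow> nat \<Rightarrow> real^'n \<Rightarrow> (nat \<Rightarrow> real^'n)" where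
  "Phi_inv f u t \<theta> = (THE ss. ss \<in> traj f u \<and> Phi t ss = \<theta>)"

text \<open>Tangent space of the trajectory manifold at a trajectory: linearized trajectories.\<close>
definition tangent :: "(real^'n \<Rightarrow> 'u \<Rightarrow> real^'n) \<Rightarrow> (nat \<Rightarrow> 'u) \<Rightarrow> (nat \<Rightarrow> real^'n) \<Rightarrow> (nat \<Rightarrow> real^'n) set" where
  "tangent f u ss = {v. \<forall>t. v (Suc t) = jac (\<lambda>x. f x (u (Suc t))) (ss t) *v v t}"

text \<open>(0,2)-tensors at a point are bilinear forms on tangent vectors; covectors are linear
  forms. Coordinate expressions in chart Phi_t and the inverse operation:\<close>

definition coord_tensor :: "(real^'n \<Rightarrow> 'u \<Rightarrow> real^'n) \<Rightarrow> (nat \<Rightarrow> 'u) \<Rightarrow> nat \<Rightarrow> (nat \<Rightarrow> real^'n)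
    \<Rightarrow> ((nat \<Rightarrow> real^'n) \<Rightarrow> (nat \<Rightarrow> real^'n) \<Rightarrow> real) \<Rightarrow> real^'n^'n" where
  "coord_tensor f u t ss g = (THE M. \<forall>v\<in>tangent f u ss. \<forall>w\<in>tangent f u ss. g v w = v t \<bullet> (M *v w t))"

definition coord_covec :: "(real^'n \<Rightarrow> 'u \<Rightarrow> real^'n) \<Rightarrow> (nat \<Rightarrow> 'u) \<Rightarrow> nat \<Rightarrow> (nat \<Rightarrow> real^'n)
    \<Rightarrow> ((nat \<Rightarrow> real^'n) \<Rightarrow> real) \<Rightarrow> real^'n" where
  "coord_covec f u t ss \<omega> = (THE c. \<forall>v\<in>tangent f u ss. \<omega> v = c \<bullet> v t)"

definition tensor_of_coord :: "nat \<Rightarrow> real^'n^'n \<Rightarrow> ((nat \<Rightarrow> real^'n) \<Rightarrow> (nat \<Rightarrow> real^'n) \<Rightarrow> real)" where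
  "tensor_of_coord t M = (\<lambda>v w. v t \<bullet> (M *v w t))"

definition frak_p :: "(real^'n \<Rightarrow> 'u \<Rightarrow> real^'k) \<Rightarrow> (nat \<Rightarrow> 'u) \<Rightarrow> 'y measure \<Rightarrow> ('y \<Rightarrow> real^'k)
    \<Rightarrow> nat \<Rightarrow> 'y \<Rightarrow> (nat \<Rightarrow> real^'n) \<Rightarrow> real" where
  "frak_p h u lam T t y ss = pobs lam T (h (Phi t ss) (u t)) y"

text \<open>Differential of s |-> ln p_t(y | s) at ss, applied to a tangent vector v
  (p_t depends on the trajectory only through the chart Phi_t).\<close>
definition score :: "(real^'n \<Rightarrow> 'u \<Rightarrow> real^'k) \<Rightarrow> (nat \<Rightarrow> 'u) \<Rightarrow> 'y measure \<Rightarrow> ('y \<Rightarrow> real^'k)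
    \<Rightarrow> nat \<Rightarrow> 'y \<Rightarrow> (nat \<Rightarrow> real^'n) \<Rightarrow> (nat \<Rightarrow> real^'n) \<Rightarrow> real" where
  "score h u lam T t y ss v =
     frechet_derivative (\<lambda>\<theta>. ln (pobs lam T (h \<theta> (u t)) y)) (at (Phi t ss)) (v t)"

definition fisher :: "(real^'n \<Rightarrow> 'u \<Rightarrow> real^'k) \<Rightarrow> (nat \<Rightarrow> 'u) \<Rightarrow> 'y measure \<Rightarrow> ('y \<Rightarrow> real^'k)
    \<Rightarrow> nat \<Rightarrow> (nat \<Rightarrow> real^'n) \<Rightarrow> (nat \<Rightarrow> real^'n) \<Rightarrow> (nat \<Rightarrow> real^'n) \<Rightarrow> real" where
  "fisher h u lam T t ss v w =
     (\<integral>y. score h u lam T t y ss v * score h u lam T t y ss w * frak_p h u lam T t y ss \<partial>lam)"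

fun ongd :: "(real^'n \<Rightarrow> 'u \<Rightarrow> real^'n) \<Rightarrow> (real^'n \<Rightarrow> 'u \<Rightarrow> real^'k) \<Rightarrow> (nat \<Rightarrow> 'u)
    \<Rightarrow> 'y measure \<Rightarrow> ('y \<Rightarrow> real^'k) \<Rightarrow> (nat \<Rightarrow> 'y) \<Rightarrow> (nat \<Rightarrow> real) \<Rightarrow> (nat \<Rightarrow> real)
    \<Rightarrow> (nat \<Rightarrow> real^'n) \<Rightarrow> real^'n^'n \<Rightarrow> nat
    \<Rightarrow> (nat \<Rightarrow> real^'n) \<times> ((nat \<Rightarrow> real^'n) \<Rightarrow> (nat \<Rightarrow> real^'n) \<Rightarrow> real)" where
  "ongd f h u lam T y \<eta> \<gamma> ss0 J0 0 = (ss0, tensor_of_coord 0 J0)"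
| "ongd f h u lam T y \<eta> \<gamma> ss0 J0 (Suc t) =
    (let (ss, G) = ongd f h u lam T y \<eta> \<gamma> ss0 J0 t;
         \<theta> = Phi (Suc t) ss;
         J = coord_tensor f u (Suc t) ss G;
         Jn = (1 - \<gamma> (Suc t)) *\<^sub>R J
              + \<gamma> (Suc t) *\<^sub>R coord_tensor f u (Suc t) ss (fisher h u lam T (Suc t) ss);
         g = coord_covec f u (Suc t) ss (score h u lam T (Suc t) (y (Suc t)) ss);
         \<theta>n = \<theta> + \<eta> (Suc t) *\<^sub>R (matrix_inv Jn *v g)
     in (Phi_inv f u (Suc t) \<theta>n, tensor_of_coord (Suc t) Jn))"

end

theory Submission
  imports Defs
begin

text \<open>In the chart \<open>Phi t\<close> the trajectory manifold is the state space, and moving a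
  metric from chart \<open>Phi t\<close> to \<open>Phi (t+1)\<close> conjugates its matrix by the inverse Jacobian \<open>F\<close>
  of the flow. Hence if \<open>P\<^sub>t = \<eta>\<^sub>t J\<^sub>t\<^sup>-\<^sup>1\<close>, the fading-memory prediction
  \<open>(1+\<alpha>) F P\<^sub>t F\<^sup>T\<close> is, up to a scalar, the inverse of the transported metric. For observations
  from an exponential family in mean parameterization the Fisher metric is \<open>H\<^sup>T R\<^sup>-\<^sup>1 H\<close> and
  the score is \<open>H\<^sup>T R\<^sup>-\<^sup>1 (T y - yh)\<close>, with \<open>R\<close> the covariance of \<open>T\<close>. So the information
  form of the Kalman update, \<open>P\<^sup>-\<^sup>1 = P\<^sub>p\<^sub>r\<^sub>e\<^sub>d\<^sup>-\<^sup>1 + H\<^sup>T R\<^sup>-\<^sup>1 H\<close> with correction \<open>P H\<^sup>T R\<^sup>-\<^sup>1 E\<close>, is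
  exactly the natural-gradient step, the recursion for \<open>\<eta>\<^sub>t\<close> absorbing the scalars; induction
  on \<open>t\<close> finishes the proof.\<close>

lemma smooth_map_differentiable: "smooth_map g \<Longrightarrow> g differentiable (at x)"
  unfolding smooth_map_def by (metis iter_dd.simps(1))

lemma jac_has_derivative:
  assumes "g differentiable (at x)"
  shows "(g has_derivative (\<lambda>v. jac g x *v v)) (at x)"
proof -
  have d: "(g has_derivative frechet_derivative g (at x)) (at x)"
    using assms frechet_derivative_works by blast
  then have "bounded_linear (frechet_derivative g (at x))" by (rule has_derivative_bounded_linear)
  then have "(\<lambda>v. jac g x *v v) = frechet_derivative g (at x)" unfolding jac_def by simp
  then show ?thesis using d by simp
qed

lemma smooth_map_partial_differentiable:
  assumes "smooth_map (\<lambda>(s, v). h s v)"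
  shows "(\<lambda>s. h s v) differentiable (at s)"
proof -
  have "(\<lambda>(s, v). h s v) differentiable (at (s, v))" using smooth_map_differentiable[OF assms] .
  moreover have "(\<lambda>s. (s, v)) differentiable (at s)"
    by (auto intro!: derivative_eq_intros simp: differentiable_def)
  ultimately have "(\<lambda>s. (\<lambda>(s, v). h s v) (s, v)) differentiable (at s)"
    using differentiable_compose[of "\<lambda>(s, v). h s v" "\<lambda>s. (s, v)"] by auto
  then show ?thesis by simp
qed

lemma diffeo_jac_invertible:
  fixes g :: "real^'n \<Rightarrow> real^'n"
  assumes "diffeo g"
  shows "invertible (jac g x)"
proof -
  have bij: "bij g" and sg: "smooth_map g" and si: "smooth_map (inv g)"
    using assms unfolding diffeo_def by auto
  have dg: "(g has_derivative (\<lambda>v. jac g x *v v)) (at x)"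
    by (rule jac_has_derivative[OF smooth_map_differentiable[OF sg]])
  have di: "(inv g has_derivative (\<lambda>v. jac (inv g) (g x) *v v)) (at (g x))"
    by (rule jac_has_derivative[OF smooth_map_differentiable[OF si]])
  have "((\<lambda>x. inv g (g x)) has_derivative (\<lambda>v. jac (inv g) (g x) *v (jac g x *v v))) (at x)"
    by (rule has_derivative_compose[OF dg di])
  moreover have "(\<lambda>x. inv g (g x)) = (\<lambda>x. x)" using bij by (simp add: bij_is_inj)
  ultimately have "((\<lambda>x. x) has_derivative (\<lambda>v. jac (inv g) (g x) *v (jac g x *v v))) (at x)" by simp
  then have "(\<lambda>v. jac (inv g) (g x) *v (jac g x *v v)) = (\<lambda>v. v)"
    using has_derivative_unique[OF _ has_derivative_ident] by blast
  then have "inj ((*v) (jac g x))" by (metis injI)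
  then show ?thesis by (metis invertible_left_inverse matrix_left_invertible_injective)
qed

lemma matrix_inv_right_left:
  assumes "invertible (A::real^'n^'n)"
  shows matrix_inv_right: "A ** matrix_inv A = mat 1"
    and matrix_inv_left: "matrix_inv A ** A = mat 1"
proof -
  have "A ** matrix_inv A = mat 1 \<and> matrix_inv A ** A = mat 1"
    using assms unfolding matrix_inv_def invertible_def by (rule someI_ex)
  then show "A ** matrix_inv A = mat 1" "matrix_inv A ** A = mat 1" by auto
qed

lemma matrix_inv_vector_right: "invertible (A::real^'n^'n) \<Longrightarrow> A *v (matrix_inv A *v x) = x"
  by (simp add: matrix_vector_mul_assoc matrix_inv_right)

lemma matrix_inv_vector_left: "invertible (A::real^'n^'n) \<Longrightarrow> matrix_inv A *v (A *v x) = x"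
  by (simp add: matrix_vector_mul_assoc matrix_inv_left)

lemma matrix_inv_eqI:
  fixes A X :: "real^'n^'n"
  assumes "X ** A = mat 1"
  shows "matrix_inv A = X"
proof -
  have i: "invertible A" using assms invertible_left_inverse by blast
  have "X = X ** (A ** matrix_inv A)" using matrix_inv_right[OF i] by simp
  also have "\<dots> = matrix_inv A" by (simp add: matrix_mul_assoc assms)
  finally show "matrix_inv A = X" by simp
qed

lemma bij_matrix_vector_mult: "invertible (A::real^'n^'n) \<Longrightarrow> bij ((*v) A)"
  by (metis bij_betw_def inj_matrix_vector_mult matrix_inv_vector_right surjI)

lemma inner_matrix_vector_transpose: "(x::real^'n) \<bullet> (A *v y) = (transpose A *v x) \<bullet> y"
  by (metis dot_lmul_matrix transpose_matrix_vector)

lemma matrix_vector_inner_transpose: "(A *v x) \<bullet> (y::real^'m) = x \<bullet> (transpose A *v y)"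
  for A :: "real^'n^'m"
  by (metis inner_matrix_vector_transpose transpose_transpose)

lemma quadratic_form_congruence:
  fixes A :: "real^'n^'k" and M :: "real^'k^'k"
  shows "x \<bullet> ((transpose A ** M ** A) *v x) = (A *v x) \<bullet> (M *v (A *v x))"
  using matrix_vector_inner_transpose[of A x "M *v (A *v x)"]
  by (simp add: matrix_vector_mul_assoc[symmetric] del: transpose_matrix_vector)

lemma symmetric_congruence:
  fixes A :: "real^'n^'k" and M :: "real^'k^'k"
  assumes "transpose M = M"
  shows "transpose (transpose A ** M ** A) = transpose A ** M ** A"
  using assms by (simp add: matrix_transpose_mul matrix_mul_assoc)

lemma matrix_eqI: "(\<And>x. (A::real^'n^'m) *v x = B *v x) \<Longrightarrow> A = B"
  using matrix_eq by blast

lemma matrix_eq_inner: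
  fixes M M' :: "real^'n^'n"
  assumes "\<And>a b. a \<bullet> (M *v b) = a \<bullet> (M' *v b)"
  shows "M = M'"
proof -
  have e: "N $ i $ j = axis i 1 \<bullet> (N *v axis j 1)" for N :: "real^'n^'n" and i j
    by (simp add: inner_axis' matrix_vector_mul_component inner_axis)
  have "M $ i $ j = M' $ i $ j" for i j
    using assms[of "axis i 1" "axis j 1"] e[of M i j] e[of M' i j] by simp
  then show ?thesis by (simp add: vec_eq_iff)
qed

lemma sym_pos_def_nonneg: "sym_pos_def M \<Longrightarrow> 0 \<le> x \<bullet> (M *v x)"
  unfolding sym_pos_def_def by (cases "x = 0") (auto intro: less_imp_le)

lemma sym_pos_def_invertible: "sym_pos_def (M::real^'n^'n) \<Longrightarrow> invertible M"
  unfolding sym_pos_def_def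
  by (metis (no_types, lifting) injI invertible_left_inverse less_irrefl matrix_left_invertible_injective
      matrix_vector_mult_0_right matrix_vector_mult_diff_distrib eq_iff_diff_eq_0 inner_zero_right)

lemma transpose_matrix_inv_symmetric:
  assumes i: "invertible (A::real^'n^'n)" and s: "transpose A = A"
  shows "transpose (matrix_inv A) = matrix_inv A"
proof -
  have "transpose (matrix_inv A) ** A = mat 1"
    using matrix_inv_right[OF i] s by (metis matrix_transpose_mul transpose_mat)
  then show ?thesis using matrix_inv_eqI by metis
qed

lemma sym_pos_def_matrix_inv:
  assumes J: "sym_pos_def (J::real^'n^'n)"
  shows "sym_pos_def (matrix_inv J)"
  unfolding sym_pos_def_def
proof (intro conjI allI impI)
  have i: "invertible J" by (rule sym_pos_def_invertible[OF J])
  show "transpose (matrix_inv J) = matrix_inv J"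
    using J transpose_matrix_inv_symmetric[OF i] unfolding sym_pos_def_def by simp
  fix x :: "real^'n" assume x: "x \<noteq> 0"
  define z where "z = matrix_inv J *v x"
  have xz: "x = J *v z" unfolding z_def by (simp add: matrix_inv_vector_right[OF i])
  have "z \<noteq> 0" using x xz by auto
  then have "0 < z \<bullet> (J *v z)" using J unfolding sym_pos_def_def by blast
  also have "z \<bullet> (J *v z) = x \<bullet> (matrix_inv J *v x)"
    unfolding xz matrix_inv_vector_left[OF i] by (simp add: inner_commute)
  finally show "0 < x \<bullet> (matrix_inv J *v x)" .
qed

lemma sym_pos_def_congruence:
  assumes M: "sym_pos_def (M::real^'n^'n)" and A: "invertible (A::real^'n^'n)"
  shows "sym_pos_def (transpose A ** M ** A)"
  unfolding sym_pos_def_def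
proof (intro conjI allI impI)
  show "transpose (transpose A ** M ** A) = transpose A ** M ** A"
    using M symmetric_congruence unfolding sym_pos_def_def by blast
  fix x :: "real^'n" assume x: "x \<noteq> 0"
  have "A *v x \<noteq> 0" using x matrix_inv_vector_left[OF A, of x] by auto
  then show "0 < x \<bullet> ((transpose A ** M ** A) *v x)"
    using M unfolding quadratic_form_congruence sym_pos_def_def by blast
qed

lemma bij_recurrence_through:
  fixes g :: "nat \<Rightarrow> 'a \<Rightarrow> 'a"
  assumes bij: "\<And>k. bij (g k)"
  obtains x where "\<forall>k. x (Suc k) = g k (x k)" and "x m = a"
proof -
  define bwd where "bwd = rec_nat a (\<lambda>j z. inv (g (m - Suc j)) z)"
  have bwd0: "bwd 0 = a" and bwdS: "bwd (Suc j) = inv (g (m - Suc j)) (bwd j)" for j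
    unfolding bwd_def by simp_all
  define fwd where "fwd = rec_nat a (\<lambda>j z. g (m + j) z)"
  have fwd0: "fwd 0 = a" and fwdS: "fwd (Suc j) = g (m + j) (fwd j)" for j
    unfolding fwd_def by simp_all
  define x where "x k = (if k \<le> m then bwd (m - k) else fwd (k - m))" for k
  have "x (Suc k) = g k (x k)" for k
  proof (cases "Suc k \<le> m")
    case True
    then have e: "m - k = Suc (m - Suc k)" by simp
    have "x k = inv (g k) (bwd (m - Suc k))"
      using True unfolding x_def e bwdS by (simp add: Suc_diff_Suc)
    then have "x k = inv (g k) (x (Suc k))" using True unfolding x_def by simp
    then show ?thesis using bij[of k] by (simp add: bij_inv_eq_iff)
  next
    case False
    then have km: "m \<le> k" by simp
    have xk: "x k = fwd (k - m)"
      using km unfolding x_def by (cases "k = m") (simp_all add: bwd0 fwd0)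
    have "x (Suc k) = fwd (Suc (k - m))" using False unfolding x_def by (simp add: Suc_diff_le km)
    also have "\<dots> = g k (fwd (k - m))" unfolding fwdS using km by simp
    finally show ?thesis using xk by simp
  qed
  moreover have "x m = a" unfolding x_def by (simp add: bwd0)
  ultimately show ?thesis using that by blast
qed

lemma inj_recurrence_unique:
  fixes g :: "nat \<Rightarrow> 'a \<Rightarrow> 'a"
  assumes inj: "\<And>k. inj (g k)"
    and x: "\<forall>k. x (Suc k) = g k (x k)" and y: "\<forall>k. y (Suc k) = g k (y k)" and m: "x m = y m"
  shows "x = y"
proof -
  have fwd: "x (m + j) = y (m + j)" for j by (induction j) (use m x y in auto)
  have bwd: "x (m - j) = y (m - j)" for j
  proof (induction j)
    case (Suc j)
    show ?case
    proof (cases "j < m")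
      case True
      then have e: "m - j = Suc (m - Suc j)" by simp
      have "g (m - Suc j) (x (m - Suc j)) = g (m - Suc j) (y (m - Suc j))"
        using Suc x y unfolding e by metis
      then show ?thesis using inj by (simp add: inj_eq)
    qed (use Suc in \<open>simp add: not_less\<close>)
  qed (use m in simp)
  show ?thesis
  proof
    fix k show "x k = y k"
      using bwd[of "m - k"] fwd[of "k - m"] by (cases "k \<le> m") simp_all
  qed
qed

lemma Phi_inv:
  fixes f :: "real^'n \<Rightarrow> 'u \<Rightarrow> real^'n"
  assumes bij: "\<And>k. bij (\<lambda>s. f s (u (Suc k)))"
  shows Phi_inv_in_traj: "Phi_inv f u m \<theta> \<in> traj f u"
    and Phi_Phi_inv: "Phi m (Phi_inv f u m \<theta>) = \<theta>"
proof -
  obtain x where x: "\<forall>k. x (Suc k) = f (x k) (u (Suc k))" "x m = \<theta>"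
    using bij_recurrence_through[of "\<lambda>k s. f s (u (Suc k))" m \<theta>] bij by blast
  have inj: "inj (\<lambda>s. f s (u (Suc k)))" for k using bij bij_is_inj by blast
  have "\<exists>!ss. ss \<in> traj f u \<and> Phi m ss = \<theta>"
  proof (rule ex1I[of _ x])
    show "x \<in> traj f u \<and> Phi m x = \<theta>" using x by (simp add: traj_def Phi_def)
    fix y assume "y \<in> traj f u \<and> Phi m y = \<theta>"
    then show "y = x" using inj_recurrence_unique[of "\<lambda>k s. f s (u (Suc k))" y x m] inj x
      by (auto simp: traj_def Phi_def)
  qed
  then have "Phi_inv f u m \<theta> \<in> traj f u \<and> Phi m (Phi_inv f u m \<theta>) = \<theta>"
    unfolding Phi_inv_def by (rule theI')
  then show "Phi_inv f u m \<theta> \<in> traj f u" "Phi m (Phi_inv f u m \<theta>) = \<theta>" by auto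
qed

lemma tangent_through:
  fixes f :: "real^'n \<Rightarrow> 'u \<Rightarrow> real^'n"
  assumes inv: "\<And>k z. invertible (jac (\<lambda>x. f x (u (Suc k))) z)"
  obtains v where "v \<in> tangent f u ss" and "v m = a"
proof -
  obtain v where "\<forall>k. v (Suc k) = jac (\<lambda>x. f x (u (Suc k))) (ss k) *v v k" "v m = a"
    using bij_recurrence_through[of "\<lambda>k v. jac (\<lambda>x. f x (u (Suc k))) (ss k) *v v" m a]
      bij_matrix_vector_mult[OF inv] by blast
  then show ?thesis using that unfolding tangent_def by blast
qed

lemma coord_tensor_eqI:
  fixes f :: "real^'n \<Rightarrow> 'u \<Rightarrow> real^'n"
  assumes inv: "\<And>k z. invertible (jac (\<lambda>x. f x (u (Suc k))) z)"
    and g: "\<And>v w. v \<in> tangent f u ss \<Longrightarrow> w \<in> tangent f u ss \<Longrightarrow> g v w = v m \<bullet> (M *v w m)"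
  shows "coord_tensor f u m ss g = M"
  unfolding coord_tensor_def
proof (rule the_equality)
  show "\<forall>v\<in>tangent f u ss. \<forall>w\<in>tangent f u ss. g v w = v m \<bullet> (M *v w m)" using g by blast
  fix M' assume M': "\<forall>v\<in>tangent f u ss. \<forall>w\<in>tangent f u ss. g v w = v m \<bullet> (M' *v w m)"
  show "M' = M"
  proof (rule matrix_eq_inner)
    fix a b :: "real^'n"
    obtain v where v: "v \<in> tangent f u ss" "v m = a" using tangent_through[of f u, OF inv] .
    obtain w where w: "w \<in> tangent f u ss" "w m = b" using tangent_through[of f u, OF inv] .
    show "a \<bullet> (M' *v b) = a \<bullet> (M *v b)" using M' g v w by metis
  qed
qed

lemma coord_covec_eqI:
  fixes f :: "real^'n \<Rightarrow> 'u \<Rightarrow> real^'n"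
  assumes inv: "\<And>k z. invertible (jac (\<lambda>x. f x (u (Suc k))) z)"
    and \<omega>: "\<And>v. v \<in> tangent f u ss \<Longrightarrow> \<omega> v = c \<bullet> v m"
  shows "coord_covec f u m ss \<omega> = c"
  unfolding coord_covec_def
proof (rule the_equality)
  show "\<forall>v\<in>tangent f u ss. \<omega> v = c \<bullet> v m" using \<omega> by blast
  fix c' assume c': "\<forall>v\<in>tangent f u ss. \<omega> v = c' \<bullet> v m"
  have "c' \<bullet> a = c \<bullet> a" for a :: "real^'n"
  proof -
    obtain v where "v \<in> tangent f u ss" "v m = a" using tangent_through[of f u, OF inv] .
    then show ?thesis using c' \<omega> by metis
  qed
  then have "(c' - c) \<bullet> (c' - c) = 0" by (simp add: inner_diff_left)
  then show "c' = c" by simp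
qed

lemma coord_tensor_of_coord:
  fixes f :: "real^'n \<Rightarrow> 'u \<Rightarrow> real^'n"
  assumes "\<And>k z. invertible (jac (\<lambda>x. f x (u (Suc k))) z)"
  shows "coord_tensor f u m ss (tensor_of_coord m M) = M"
  by (rule coord_tensor_eqI[of f u, OF assms]) (simp add: tensor_of_coord_def)

lemma coord_tensor_of_coord_Suc:
  fixes f :: "real^'n \<Rightarrow> 'u \<Rightarrow> real^'n" and ss :: "nat \<Rightarrow> real^'n" and m :: nat
  assumes inv: "\<And>k z. invertible (jac (\<lambda>x. f x (u (Suc k))) z)"
  defines "F \<equiv> jac (\<lambda>x. f x (u (Suc m))) (ss m)"
  shows "coord_tensor f u (Suc m) ss (tensor_of_coord m M)
       = transpose (matrix_inv F) ** M ** matrix_inv F"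
proof (rule coord_tensor_eqI[of f u, OF inv])
  have i: "invertible F" unfolding F_def by (rule inv)
  fix v w assume "v \<in> tangent f u ss" and "w \<in> tangent f u ss"
  then have "v (Suc m) = F *v v m" and "w (Suc m) = F *v w m"
    unfolding tangent_def F_def by auto
  then have "v m = matrix_inv F *v v (Suc m)" and "w m = matrix_inv F *v w (Suc m)"
    by (simp_all add: matrix_inv_vector_left[OF i])
  then show "tensor_of_coord m M v w
      = v (Suc m) \<bullet> ((transpose (matrix_inv F) ** M ** matrix_inv F) *v w (Suc m))"
    unfolding tensor_of_coord_def quadratic_form_congruence
    by (simp add: matrix_vector_mul_assoc[symmetric] inner_matrix_vector_transpose
        del: transpose_matrix_vector)
qed

lemma kalman_information_form:
  fixes Pp Ai :: "real^'n^'n" and H :: "real^'n^'k" and R :: "real^'k^'k"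
  assumes invS: "invertible (H ** Pp ** transpose H + R)" and invR: "invertible R"
    and PpAi: "Pp ** Ai = mat 1"
  defines "K \<equiv> Pp ** transpose H ** matrix_inv (H ** Pp ** transpose H + R)"
  defines "Pn \<equiv> (mat 1 - K ** H) ** Pp"
  shows "Pn ** (Ai + transpose H ** matrix_inv R ** H) = mat 1"
    and "Pn *v (transpose H *v (matrix_inv R *v E)) = K *v E"
proof -
  define S where "S = H ** Pp ** transpose H + R"
  define Ht where "Ht = transpose H"
  have "K ** S = Pp ** Ht ** (matrix_inv S ** S)"
    unfolding K_def S_def Ht_def by (simp add: matrix_mul_assoc)
  then have KS: "K *v (S *v z) = Pp *v (Ht *v z)" for z
    unfolding S_def matrix_inv_left[OF invS]
    by (simp add: matrix_vector_mul_assoc del: transpose_matrix_vector)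
  have S: "S *v z = H *v (Pp *v (Ht *v z)) + R *v z" for z
    unfolding S_def Ht_def by (simp add: matrix_vector_mult_add_rdistrib matrix_vector_mul_assoc[symmetric])
  have Pn: "Pn *v x = Pp *v x - K *v (H *v (Pp *v x))" for x
    unfolding Pn_def by (simp add: matrix_vector_mul_assoc[symmetric] matrix_vector_mult_diff_rdistrib)
  have gain: "Pn *v (Ht *v z) = K *v (R *v z)" for z
    using KS[of z] unfolding S Pn matrix_vector_right_distrib by (metis add_diff_cancel_left')
  show "Pn *v (transpose H *v (matrix_inv R *v E)) = K *v E"
    using gain[of "matrix_inv R *v E"] unfolding Ht_def matrix_inv_vector_right[OF invR] .
  show "Pn ** (Ai + transpose H ** matrix_inv R ** H) = mat 1"
  proof (rule matrix_eqI)
    fix x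
    have "Pn *v ((Ai + transpose H ** matrix_inv R ** H) *v x)
        = Pn *v (Ai *v x) + Pn *v (Ht *v (matrix_inv R *v (H *v x)))"
      unfolding Ht_def
      by (simp add: matrix_vector_mult_add_rdistrib matrix_vector_right_distrib
          matrix_vector_mul_assoc[symmetric] del: transpose_matrix_vector)
    also have "Pn *v (Ai *v x) = x - K *v (H *v x)"
      unfolding Pn using PpAi by (simp add: matrix_vector_mul_assoc)
    also have "Pn *v (Ht *v (matrix_inv R *v (H *v x))) = K *v (H *v x)"
      unfolding gain matrix_inv_vector_right[OF invR] ..
    finally show "(Pn ** (Ai + transpose H ** matrix_inv R ** H)) *v x = mat 1 *v x"
      by (simp add: matrix_vector_mul_assoc[symmetric])
  qed
qed

lemma sym_pos_def_innovation:
  fixes Pp :: "real^'n^'n" and H :: "real^'n^'k" and R :: "real^'k^'k"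
  assumes Pp_sym: "transpose Pp = Pp" and Pp_nonneg: "\<And>x. 0 \<le> x \<bullet> (Pp *v x)"
    and R: "sym_pos_def R"
  shows "sym_pos_def (H ** Pp ** transpose H + R)"
  unfolding sym_pos_def_def
proof (intro conjI allI impI)
  have "transpose (H ** Pp ** transpose H) = H ** Pp ** transpose H"
    using symmetric_congruence[OF Pp_sym, of "transpose H"] by simp
  then show "transpose (H ** Pp ** transpose H + R) = H ** Pp ** transpose H + R"
    using R unfolding sym_pos_def_def by (simp add: transpose_def vec_eq_iff)
  fix x :: "real^'k" assume x: "x \<noteq> 0"
  have "x \<bullet> ((H ** Pp ** transpose H + R) *v x)
      = (transpose H *v x) \<bullet> (Pp *v (transpose H *v x)) + x \<bullet> (R *v x)"
    using quadratic_form_congruence[of x "transpose H" Pp]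
    by (simp add: matrix_vector_mult_add_rdistrib inner_add_right)
  moreover have "0 < x \<bullet> (R *v x)" using R x unfolding sym_pos_def_def by blast
  ultimately show "0 < x \<bullet> ((H ** Pp ** transpose H + R) *v x)"
    using Pp_nonneg[of "transpose H *v x"] by simp
qed

lemma fading_memory_step_size:
  fixes \<eta> \<eta>' \<alpha> :: real
  assumes eta: "\<eta> > 0" and alpha: "\<alpha> \<ge> 0"
    and eta': "1 / \<eta>' = (1 / (1 + \<alpha>)) * (1 / \<eta>) + 1"
  shows "0 < \<eta>'" and "\<eta>' < 1" and "1 - \<eta>' = \<eta>' * (1 / ((1 + \<alpha>) * \<eta>))"
proof -
  have inv: "1 / \<eta>' = 1 / ((1 + \<alpha>) * \<eta>) + 1" using eta' by simp
  moreover have "1 / ((1 + \<alpha>) * \<eta>) > 0" using eta alpha by simp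
  ultimately have gt1: "1 / \<eta>' > 1" by simp
  then show pos: "0 < \<eta>'" by (metis less_trans zero_less_divide_1_iff zero_less_one)
  show "\<eta>' < 1" using gt1 pos by (simp add: field_simps)
  show "1 - \<eta>' = \<eta>' * (1 / ((1 + \<alpha>) * \<eta>))"
    using inv pos by (simp add: field_simps)
qed

lemma sym_pos_def_scaleR: "c > 0 \<Longrightarrow> sym_pos_def M \<Longrightarrow> sym_pos_def (c *\<^sub>R M)"
  unfolding sym_pos_def_def by (simp add: transpose_scalar scaleR_matrix_vector_assoc[symmetric])

lemma invertible_matrix_inv: "invertible (A::real^'n^'n) \<Longrightarrow> invertible (matrix_inv A)"
  by (metis invertible_def matrix_inv_left matrix_inv_right)

lemma congruence_matrix_inv:
  fixes F J :: "real^'n^'n"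
  assumes J: "invertible J" and F: "invertible F"
  shows "(F ** matrix_inv J ** transpose F) ** (transpose (matrix_inv F) ** J ** matrix_inv F) = mat 1"
proof -
  have FtFit: "transpose F ** transpose (matrix_inv F) = mat 1"
    by (metis matrix_inv_left[OF F] matrix_transpose_mul transpose_mat)
  have "(F ** matrix_inv J ** transpose F) ** (transpose (matrix_inv F) ** J ** matrix_inv F)
      = F ** matrix_inv J ** (transpose F ** transpose (matrix_inv F)) ** J ** matrix_inv F"
    by (simp add: matrix_mul_assoc)
  also have "\<dots> = F ** (matrix_inv J ** J) ** matrix_inv F" by (simp add: FtFit matrix_mul_assoc)
  also have "\<dots> = mat 1" by (simp add: matrix_inv_left[OF J] matrix_inv_right[OF F])
  finally show ?thesis .
qed

lemma sym_pos_def_information_mix: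
  fixes A :: "real^'n^'n" and H :: "real^'n^'k" and R :: "real^'k^'k"
  assumes A: "sym_pos_def A" and R: "sym_pos_def R" and c: "0 < c" "c < 1"
  shows "sym_pos_def ((1 - c) *\<^sub>R A + c *\<^sub>R (transpose H ** matrix_inv R ** H))"
  unfolding sym_pos_def_def
proof (intro conjI allI impI)
  have Ri: "sym_pos_def (matrix_inv R)" by (rule sym_pos_def_matrix_inv[OF R])
  show "transpose ((1 - c) *\<^sub>R A + c *\<^sub>R (transpose H ** matrix_inv R ** H))
      = (1 - c) *\<^sub>R A + c *\<^sub>R (transpose H ** matrix_inv R ** H)"
    using A symmetric_congruence[of "matrix_inv R" H] Ri unfolding sym_pos_def_def
    by (simp add: transpose_scalar transpose_def vec_eq_iff)
  fix x :: "real^'n" assume x: "x \<noteq> 0"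
  have "0 < (1 - c) * (x \<bullet> (A *v x))" using A x c unfolding sym_pos_def_def by simp
  moreover have "0 \<le> c * (x \<bullet> ((transpose H ** matrix_inv R ** H) *v x))"
    using c sym_pos_def_nonneg[OF Ri, of "H *v x"] unfolding quadratic_form_congruence by simp
  ultimately show "0 < x \<bullet> (((1 - c) *\<^sub>R A + c *\<^sub>R (transpose H ** matrix_inv R ** H)) *v x)"
    by (simp add: matrix_vector_mult_add_rdistrib inner_add_right
        scaleR_matrix_vector_assoc[symmetric] del: transpose_matrix_vector)
qed

lemma fading_memory_ekf_step:
  fixes F J :: "real^'n^'n" and H :: "real^'n^'k" and R :: "real^'k^'k"
  assumes J: "sym_pos_def J" and R: "sym_pos_def R" and F: "invertible F"
    and eta: "\<eta> > 0" and alpha: "\<alpha> \<ge> 0" and eta': "1 / \<eta>' = (1 / (1 + \<alpha>)) * (1 / \<eta>) + 1"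
  defines "P \<equiv> \<eta> *\<^sub>R matrix_inv J"
  defines "Pp \<equiv> F ** P ** transpose F + \<alpha> *\<^sub>R (F ** P ** transpose F)"
  defines "K \<equiv> Pp ** transpose H ** matrix_inv (H ** Pp ** transpose H + R)"
  defines "Jn \<equiv> (1 - \<eta>') *\<^sub>R (transpose (matrix_inv F) ** J ** matrix_inv F)
                + \<eta>' *\<^sub>R (transpose H ** matrix_inv R ** H)"
  shows "sym_pos_def Jn"
    and "(mat 1 - K ** H) ** Pp = \<eta>' *\<^sub>R matrix_inv Jn"
    and "K *v E = \<eta>' *\<^sub>R (matrix_inv Jn *v (transpose H *v (matrix_inv R *v E)))"
proof -
  define c where "c = (1 + \<alpha>) * \<eta>"
  have c: "c > 0" unfolding c_def using alpha eta by simp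
  have pos: "0 < \<eta>'" and lt1: "\<eta>' < 1" and ratio: "1 - \<eta>' = \<eta>' * (1 / c)"
    using fading_memory_step_size[OF eta alpha eta'] unfolding c_def by auto
  define Ai where "Ai = (1 / c) *\<^sub>R (transpose (matrix_inv F) ** J ** matrix_inv F)"
  define B where "B = transpose H ** matrix_inv R ** H"
  have Pp: "Pp = c *\<^sub>R (F ** matrix_inv J ** transpose F)"
    unfolding Pp_def P_def c_def by (simp add: matrix_scalar_ac scalar_matrix_assoc[symmetric] algebra_simps)
  have PpAi: "Pp ** Ai = mat 1"
    using congruence_matrix_inv[OF sym_pos_def_invertible[OF J] F] c unfolding Pp Ai_def
    by (simp add: matrix_scalar_ac scalar_matrix_assoc[symmetric])
  have "sym_pos_def Pp"
    using sym_pos_def_congruence[OF sym_pos_def_matrix_inv[OF J] transpose_invertible[OF F]]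
    unfolding Pp by (intro sym_pos_def_scaleR c) simp
  then have "invertible (H ** Pp ** transpose H + R)"
    by (intro sym_pos_def_invertible sym_pos_def_innovation R sym_pos_def_nonneg)
      (simp add: sym_pos_def_def)
  note info = kalman_information_form[OF this sym_pos_def_invertible[OF R] PpAi, folded K_def B_def]
  have Jn: "Jn = \<eta>' *\<^sub>R (Ai + B)"
    unfolding Jn_def Ai_def B_def ratio by (simp add: scaleR_add_right)
  have "((1 / \<eta>') *\<^sub>R ((mat 1 - K ** H) ** Pp)) ** Jn = mat 1"
    using info(1) pos unfolding Jn by (simp add: matrix_scalar_ac scalar_matrix_assoc[symmetric])
  then have iJn: "matrix_inv Jn = (1 / \<eta>') *\<^sub>R ((mat 1 - K ** H) ** Pp)"
    by (rule matrix_inv_eqI)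
  show Pn: "(mat 1 - K ** H) ** Pp = \<eta>' *\<^sub>R matrix_inv Jn"
    unfolding iJn using pos by simp
  show "K *v E = \<eta>' *\<^sub>R (matrix_inv Jn *v (transpose H *v (matrix_inv R *v E)))"
    using info(2)[of E] unfolding Pn by (simp add: scaleR_matrix_vector_assoc)
  show "sym_pos_def Jn"
    unfolding Jn_def using pos lt1
    by (intro sym_pos_def_information_mix R sym_pos_def_congruence J invertible_matrix_inv F)
qed

lemma power_div_fact_le_exp:
  fixes x :: real
  assumes "x \<ge> 0"
  shows "x ^ n / fact n \<le> exp x"
proof -
  obtain t where t: "exp x = (\<Sum>m<Suc n. (x ^ m) / fact m) + (exp t / fact (Suc n)) * x ^ Suc n"
    using Maclaurin_exp_le[of x "Suc n"] by blast
  have "x ^ n / fact n \<le> (\<Sum>m<Suc n. (x ^ m) / fact m)"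
    by (rule member_le_sum) (use assms in auto)
  moreover have "0 \<le> (exp t / fact (Suc n)) * x ^ Suc n" using assms by simp
  ultimately show ?thesis using t by linarith
qed

lemma power_le_exp_scaled:
  fixes x e :: real
  assumes "x \<ge> 0" "e > 0"
  shows "x ^ n \<le> (fact n / e ^ n) * exp (e * x)"
proof -
  have "(e * x) ^ n / fact n \<le> exp (e * x)" using power_div_fact_le_exp[of "e * x" n] assms by simp
  then have "e ^ n * x ^ n \<le> fact n * exp (e * x)"
    by (simp add: power_mult_distrib divide_le_eq mult.commute)
  then show ?thesis using assms by (simp add: field_simps)
qed

lemma abs_exp_add_minus_linear_le:
  fixes B x s :: real
  assumes "\<bar>x\<bar> \<le> s"
  shows "\<bar>exp (B + x) - exp B - x * exp B\<bar> \<le> x\<^sup>2 * exp (B + s)"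
proof -
  obtain t where t: "\<bar>t\<bar> \<le> \<bar>x\<bar>" "exp x = (\<Sum>m<2. (x ^ m) / fact m) + (exp t / fact 2) * x ^ 2"
    using Maclaurin_exp_le[of x 2] by blast
  have "exp (B + x) - exp B - x * exp B = exp B * (exp x - 1 - x)"
    by (simp add: exp_add algebra_simps)
  also have "exp x - 1 - x = (exp t / 2) * x\<^sup>2"
    using t(2) by (simp add: numeral_2_eq_2)
  finally have e: "exp (B + x) - exp B - x * exp B = exp B * (exp t / 2) * x\<^sup>2"
    by simp
  have "\<bar>exp (B + x) - exp B - x * exp B\<bar> = exp B * (exp t / 2) * x\<^sup>2"
    unfolding e by (simp add: abs_mult)
  also have "\<dots> \<le> exp B * exp s * x\<^sup>2"
  proof -
    have "exp t \<le> exp s" using t(1) assms by simp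
    then have "exp t / 2 \<le> exp s" using exp_gt_zero[of t] by linarith
    then show ?thesis by (intro mult_right_mono mult_left_mono) auto
  qed
  finally show ?thesis by (simp add: exp_add mult_ac)
qed

lemma has_derivative_quadratic_remainder:
  fixes G :: "'a::real_normed_vector \<Rightarrow> 'b::real_normed_vector"
  assumes L: "bounded_linear L" and r: "r > 0" and C: "C \<ge> 0"
    and bnd: "\<And>x. norm (x - x0) < r \<Longrightarrow> norm (G x - G x0 - L (x - x0)) \<le> C * (norm (x - x0))\<^sup>2"
  shows "(G has_derivative L) (at x0)"
  unfolding has_derivative_at_alt
proof (intro conjI allI impI L)
  fix e :: real assume e: "e > 0"
  show "\<exists>d>0. \<forall>y. norm (y - x0) < d \<longrightarrow> norm (G y - G x0 - L (y - x0)) \<le> e * norm (y - x0)"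
  proof (intro exI[of _ "min r (e / (C+1))"] conjI allI impI)
    show "min r (e/(C+1)) > 0" using r e C by auto
    fix y assume y: "norm (y - x0) < min r (e / (C+1))"
    have "norm (G y - G x0 - L (y - x0)) \<le> C * (norm (y-x0))\<^sup>2" using y by (intro bnd) auto
    also have "\<dots> \<le> ((C+1) * norm (y-x0)) * norm (y-x0)"
      using C by (simp add: power2_eq_square distrib_right)
    also have "\<dots> \<le> e * norm (y - x0)"
      using y C by (intro mult_right_mono) (simp_all add: field_simps)
    finally show "norm (G y - G x0 - L (y - x0)) \<le> e * norm (y - x0)" .
  qed
qed

text \<open>On \<open>\<real>\<^sup>k\<close> the sup norm dominates \<open>\<parallel>x\<parallel> / k\<close>, and a coordinate of maximal modulus
  is reached by one of the \<open>2k\<close> shifted linear forms \<open>(b \<pm> r e\<^sub>i) \<bullet> x\<close>.\<close>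
lemma exp_inner_plus_norm_le_sum:
  fixes x b :: "real^'k" and r :: real
  assumes "r \<ge> 0"
  shows "exp (b \<bullet> x + (r / CARD('k)) * norm x)
     \<le> (\<Sum>i\<in>UNIV. exp ((b + r *\<^sub>R axis i 1) \<bullet> x) + exp ((b - r *\<^sub>R axis i 1) \<bullet> x))"
proof -
  define M where "M = Max (range (\<lambda>i. \<bar>x $ i\<bar>))"
  have "M \<in> range (\<lambda>i. \<bar>x $ i\<bar>)" unfolding M_def by (rule Max_in) auto
  then obtain i0 where i0: "M = \<bar>x $ i0\<bar>" by auto
  have le: "\<bar>x $ i\<bar> \<le> M" for i unfolding M_def by (rule Max_ge) auto
  have "norm x \<le> (\<Sum>i\<in>UNIV. \<bar>x $ i\<bar>)" by (rule norm_le_l1_cart)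
  also have "\<dots> \<le> of_nat (card (UNIV::'k set)) * M" by (rule sum_bounded_above) (use le in auto)
  finally have "(r / CARD('k)) * norm x \<le> (r / CARD('k)) * (CARD('k) * M)"
    by (rule mult_left_mono) (use assms in simp)
  then have a: "(r / CARD('k)) * norm x \<le> r * \<bar>x $ i0\<bar>" using i0 by simp
  have e1: "(b + r *\<^sub>R axis i0 1) \<bullet> x = b \<bullet> x + r * x $ i0"
    by (simp add: inner_add_left inner_axis')
  have e2: "(b - r *\<^sub>R axis i0 1) \<bullet> x = b \<bullet> x - r * x $ i0"
    by (simp add: inner_diff_left inner_axis')
  have "exp (b \<bullet> x + (r / CARD('k)) * norm x) \<le> exp (b \<bullet> x + r * \<bar>x $ i0\<bar>)"
    using a by simp
  also have "\<dots> \<le> exp ((b + r *\<^sub>R axis i0 1) \<bullet> x) + exp ((b - r *\<^sub>R axis i0 1) \<bullet> x)"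
    unfolding e1 e2 by (cases "x $ i0 \<ge> 0") (auto simp: abs_if)
  also have "\<dots> \<le> (\<Sum>i\<in>UNIV. exp ((b + r *\<^sub>R axis i 1) \<bullet> x) + exp ((b - r *\<^sub>R axis i 1) \<bullet> x))"
    by (rule member_le_sum[where f="\<lambda>i. exp ((b + r *\<^sub>R axis i 1) \<bullet> x) + exp ((b - r *\<^sub>R axis i 1) \<bullet> x)"])
       (auto intro: add_nonneg_nonneg)
  finally show ?thesis .
qed

locale exp_family =
  fixes lam :: "'y measure" and T :: "'y \<Rightarrow> real^'k"
  assumes expfam: "expfam_stats lam T"
begin

lemma T_measurable[measurable]: "T \<in> borel_measurable lam"
  using expfam by (simp add: expfam_stats_def)

lemma T_component_measurable[measurable]: "(\<lambda>y. T y $ i) \<in> borel_measurable lam"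
proof -
  have "(\<lambda>y. T y $ i) = (\<lambda>y. T y \<bullet> axis i 1)" by (simp add: cart_eq_inner_axis)
  then show ?thesis by (simp only:) measurable
qed

abbreviation "NS \<equiv> nat_space lam T"

lemma integrable_exp_plus_norm:
  assumes "cball b r \<subseteq> NS" "r \<ge> 0"
  shows "integrable lam (\<lambda>y. exp (b \<bullet> T y + (r / CARD('k)) * norm (T y)))"
proof (rule Bochner_Integration.integrable_bound)
  have "b + r *\<^sub>R axis i 1 \<in> NS" "b - r *\<^sub>R axis i 1 \<in> NS" for i
    using assms by (auto intro!: subsetD[OF assms(1)] simp: dist_norm norm_axis_1)
  then show "integrable lam (\<lambda>y. \<Sum>i\<in>UNIV. exp ((b + r *\<^sub>R axis i 1) \<bullet> T y) + exp ((b - r *\<^sub>R axis i 1) \<bullet> T y))"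
    by (intro Bochner_Integration.integrable_sum Bochner_Integration.integrable_add)
      (auto simp: nat_space_def)
  show "AE y in lam. norm (exp (b \<bullet> T y + (r / CARD('k)) * norm (T y)))
      \<le> norm (\<Sum>i\<in>UNIV. exp ((b + r *\<^sub>R axis i 1) \<bullet> T y) + exp ((b - r *\<^sub>R axis i 1) \<bullet> T y))"
  proof (rule AE_I2)
    fix y
    have "0 \<le> (\<Sum>i\<in>UNIV. exp ((b + r *\<^sub>R axis i 1) \<bullet> T y) + exp ((b - r *\<^sub>R axis i 1) \<bullet> T y))"
      by (intro sum_nonneg add_nonneg_nonneg) auto
    then show "norm (exp (b \<bullet> T y + (r / CARD('k)) * norm (T y)))
      \<le> norm (\<Sum>i\<in>UNIV. exp ((b + r *\<^sub>R axis i 1) \<bullet> T y) + exp ((b - r *\<^sub>R axis i 1) \<bullet> T y))"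
      using exp_inner_plus_norm_le_sum[OF assms(2), of b "T y"] by simp
  qed
qed measurable

text \<open>These moments dominate, uniformly for natural parameters within distance \<open>\<rho>\<close> of \<open>b\<close>,
  every integrand differentiated below.\<close>
definition exp_moments :: "real^'k \<Rightarrow> real \<Rightarrow> bool" where
  "exp_moments b \<rho> \<longleftrightarrow> \<rho> > 0 \<and>
     (\<forall>n. integrable lam (\<lambda>y. norm (T y) ^ n * exp (b \<bullet> T y + \<rho> * norm (T y))))"

lemma interior_nat_space_exp_moments:
  assumes "b \<in> interior NS"
  obtains \<rho> where "exp_moments b \<rho>"
proof -
  obtain r where "r > 0" "cball b r \<subseteq> interior NS"
    using assms open_contains_cball open_interior by blast
  then have r: "r > 0" "cball b r \<subseteq> NS" using interior_subset by blast+
  define \<rho> where "\<rho> = r / CARD('k)"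
  have \<rho>: "\<rho> > 0" unfolding \<rho>_def using r by simp
  have E: "integrable lam (\<lambda>y. exp (b \<bullet> T y + \<rho> * norm (T y)))"
    unfolding \<rho>_def using integrable_exp_plus_norm[OF r(2)] r(1) by simp
  have "integrable lam (\<lambda>y. norm (T y) ^ n * exp (b \<bullet> T y + (\<rho>/2) * norm (T y)))" for n
  proof (rule Bochner_Integration.integrable_bound)
    show "integrable lam (\<lambda>y. (fact n / (\<rho>/2) ^ n) * exp (b \<bullet> T y + \<rho> * norm (T y)))"
      using E by simp
    show "AE y in lam. norm (norm (T y) ^ n * exp (b \<bullet> T y + (\<rho>/2) * norm (T y)))
       \<le> norm ((fact n / (\<rho>/2) ^ n) * exp (b \<bullet> T y + \<rho> * norm (T y)))"
    proof (rule AE_I2)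
      fix y
      have "norm (T y) ^ n * exp (b \<bullet> T y + (\<rho>/2) * norm (T y))
          = norm (T y) ^ n * exp ((\<rho>/2) * norm (T y)) * exp (b \<bullet> T y)"
        by (simp add: exp_add)
      also have "\<dots> \<le> (fact n / (\<rho>/2) ^ n) * exp ((\<rho>/2) * norm (T y)) * exp ((\<rho>/2) * norm (T y))
                      * exp (b \<bullet> T y)"
        using power_le_exp_scaled[of "norm (T y)" "\<rho>/2" n] \<rho> by (intro mult_right_mono) auto
      also have "\<dots> = (fact n / (\<rho>/2) ^ n) * exp (b \<bullet> T y + \<rho> * norm (T y))"
        by (simp add: exp_add[symmetric] field_simps)
      finally show "norm (norm (T y) ^ n * exp (b \<bullet> T y + (\<rho>/2) * norm (T y)))
       \<le> norm ((fact n / (\<rho>/2) ^ n) * exp (b \<bullet> T y + \<rho> * norm (T y)))"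
        using \<rho> by simp
    qed
  qed measurable
  then show ?thesis using \<rho> that[of "\<rho>/2"] unfolding exp_moments_def by auto
qed

lemma integrable_affine_moment:
  assumes "exp_moments b \<rho>"
  shows "integrable lam (\<lambda>y. (a + norm (T y)) * norm (T y) ^ n * exp (b \<bullet> T y + \<rho> * norm (T y)))"
proof -
  have m: "integrable lam (\<lambda>y. norm (T y) ^ n * exp (b \<bullet> T y + \<rho> * norm (T y)))" for n
    using assms unfolding exp_moments_def by blast
  have "integrable lam (\<lambda>y. a * (norm (T y) ^ n * exp (b \<bullet> T y + \<rho> * norm (T y)))
      + norm (T y) ^ Suc n * exp (b \<bullet> T y + \<rho> * norm (T y)))"
    by (intro Bochner_Integration.integrable_add integrable_mult_right m)
  then show ?thesis by (simp add: algebra_simps)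
qed

lemma norm_exp_inner_scaleR_le:
  fixes \<Phi> :: "'y \<Rightarrow> 'b::real_normed_vector"
  assumes "norm (\<beta> - b) \<le> \<rho>" and "norm (\<Phi> y) \<le> a + norm (T y)"
  shows "norm (exp (\<beta> \<bullet> T y) *\<^sub>R \<Phi> y)
    \<le> (a + norm (T y)) * norm (T y) ^ 0 * exp (b \<bullet> T y + \<rho> * norm (T y))"
proof -
  have "\<beta> \<bullet> T y = b \<bullet> T y + (\<beta> - b) \<bullet> T y" by (simp add: inner_diff_left)
  also have "\<dots> \<le> b \<bullet> T y + \<rho> * norm (T y)"
    using Cauchy_Schwarz_ineq2[of "\<beta> - b" "T y"] assms(1)
      mult_right_mono[of "norm (\<beta> - b)" \<rho> "norm (T y)"] by auto
  finally have "exp (\<beta> \<bullet> T y) \<le> exp (b \<bullet> T y + \<rho> * norm (T y))" by simp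
  then have "exp (\<beta> \<bullet> T y) * norm (\<Phi> y) \<le> exp (b \<bullet> T y + \<rho> * norm (T y)) * (a + norm (T y))"
    using assms(2) by (intro mult_mono) auto
  then show ?thesis by (simp add: mult.commute)
qed

lemma norm_inner_exp_scaleR_le:
  fixes \<Phi> :: "'y \<Rightarrow> 'b::real_normed_vector"
  assumes "\<rho> \<ge> 0" and "norm (\<Phi> y) \<le> a + norm (T y)"
  shows "norm (((d \<bullet> T y) * exp (b \<bullet> T y)) *\<^sub>R \<Phi> y)
    \<le> norm d * ((a + norm (T y)) * norm (T y) ^ 1 * exp (b \<bullet> T y + \<rho> * norm (T y)))"
proof -
  have "exp (b \<bullet> T y) \<le> exp (b \<bullet> T y + \<rho> * norm (T y))" using assms(1) by simp
  then have "\<bar>d \<bullet> T y\<bar> * exp (b \<bullet> T y) * norm (\<Phi> y)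
      \<le> (norm d * norm (T y)) * exp (b \<bullet> T y + \<rho> * norm (T y)) * (a + norm (T y))"
    using assms(2) Cauchy_Schwarz_ineq2[of d "T y"] by (intro mult_mono) auto
  then show ?thesis by (simp add: abs_mult algebra_simps)
qed

lemma integrable_exp_inner_scaleR:
  fixes \<Phi> :: "'y \<Rightarrow> 'b::{banach,second_countable_topology}"
  assumes mom: "exp_moments b \<rho>" and [measurable]: "\<Phi> \<in> borel_measurable lam"
    and bnd: "\<And>y. norm (\<Phi> y) \<le> a + norm (T y)" and \<beta>: "norm (\<beta> - b) < \<rho>"
  shows "integrable lam (\<lambda>y. exp (\<beta> \<bullet> T y) *\<^sub>R \<Phi> y)"
proof (rule Bochner_Integration.integrable_bound)
  show "integrable lam (\<lambda>y. (a + norm (T y)) * norm (T y) ^ 0 * exp (b \<bullet> T y + \<rho> * norm (T y)))"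
    by (rule integrable_affine_moment[OF mom])
  show "AE y in lam. norm (exp (\<beta> \<bullet> T y) *\<^sub>R \<Phi> y)
      \<le> norm ((a + norm (T y)) * norm (T y) ^ 0 * exp (b \<bullet> T y + \<rho> * norm (T y)))"
    using norm_exp_inner_scaleR_le[of \<beta> b \<rho> \<Phi>] bnd \<beta>
    by (intro AE_I2) (smt (verit) norm_ge_zero real_norm_def)
qed measurable

lemma integrable_inner_exp_scaleR:
  fixes \<Phi> :: "'y \<Rightarrow> 'b::{banach,second_countable_topology}"
  assumes mom: "exp_moments b \<rho>" and [measurable]: "\<Phi> \<in> borel_measurable lam"
    and bnd: "\<And>y. norm (\<Phi> y) \<le> a + norm (T y)"
  shows "integrable lam (\<lambda>y. ((d \<bullet> T y) * exp (b \<bullet> T y)) *\<^sub>R \<Phi> y)"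
proof (rule Bochner_Integration.integrable_bound)
  have "\<rho> \<ge> 0" using mom unfolding exp_moments_def by simp
  then show "AE y in lam. norm (((d \<bullet> T y) * exp (b \<bullet> T y)) *\<^sub>R \<Phi> y)
      \<le> norm (norm d * ((a + norm (T y)) * norm (T y) ^ 1 * exp (b \<bullet> T y + \<rho> * norm (T y))))"
    using norm_inner_exp_scaleR_le[of \<rho> \<Phi> _ a d b] bnd
    by (intro AE_I2) (smt (verit) norm_ge_zero real_norm_def)
qed (use integrable_affine_moment[OF mom, of a 1] in auto)

lemma norm_exp_inner_taylor_remainder_le:
  fixes \<Phi> :: "'y \<Rightarrow> 'b::real_normed_vector"
  assumes \<beta>: "norm (\<beta> - b) \<le> \<rho>" and bnd: "norm (\<Phi> y) \<le> a + norm (T y)"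
  shows "norm (exp (\<beta> \<bullet> T y) *\<^sub>R \<Phi> y - exp (b \<bullet> T y) *\<^sub>R \<Phi> y
                - (((\<beta> - b) \<bullet> T y) * exp (b \<bullet> T y)) *\<^sub>R \<Phi> y)
    \<le> (norm (\<beta> - b))\<^sup>2 * ((a + norm (T y)) * norm (T y) ^ 2 * exp (b \<bullet> T y + \<rho> * norm (T y)))"
proof -
  define x where "x = (\<beta> - b) \<bullet> T y"
  have xb: "\<bar>x\<bar> \<le> \<rho> * norm (T y)" unfolding x_def
    using Cauchy_Schwarz_ineq2[of "\<beta> - b" "T y"] \<beta>
      mult_right_mono[of "norm (\<beta> - b)" \<rho> "norm (T y)"] by auto
  have x2: "x\<^sup>2 \<le> (norm (\<beta> - b))\<^sup>2 * (norm (T y))\<^sup>2" unfolding x_def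
    using Cauchy_Schwarz_ineq2[of "\<beta> - b" "T y"]
    by (metis abs_ge_zero power_mono power_mult_distrib power2_abs)
  have "exp (\<beta> \<bullet> T y) *\<^sub>R \<Phi> y - exp (b \<bullet> T y) *\<^sub>R \<Phi> y - (x * exp (b \<bullet> T y)) *\<^sub>R \<Phi> y
      = (exp (b \<bullet> T y + x) - exp (b \<bullet> T y) - x * exp (b \<bullet> T y)) *\<^sub>R \<Phi> y"
    unfolding x_def by (simp add: inner_diff_left algebra_simps)
  then have "norm (exp (\<beta> \<bullet> T y) *\<^sub>R \<Phi> y - exp (b \<bullet> T y) *\<^sub>R \<Phi> y - (x * exp (b \<bullet> T y)) *\<^sub>R \<Phi> y)
      = \<bar>exp (b \<bullet> T y + x) - exp (b \<bullet> T y) - x * exp (b \<bullet> T y)\<bar> * norm (\<Phi> y)"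
    by simp
  also have "\<dots> \<le> (x\<^sup>2 * exp (b \<bullet> T y + \<rho> * norm (T y))) * (a + norm (T y))"
    by (intro mult_mono abs_exp_add_minus_linear_le xb bnd) auto
  also have "\<dots> \<le> ((norm (\<beta> - b))\<^sup>2 * (norm (T y))\<^sup>2 * exp (b \<bullet> T y + \<rho> * norm (T y))) * (a + norm (T y))"
    using bnd by (intro mult_right_mono x2) (auto intro: order_trans[OF norm_ge_zero])
  finally show ?thesis unfolding x_def by (simp add: algebra_simps power2_eq_square)
qed

lemma bounded_linear_integral_inner_exp:
  fixes \<Phi> :: "'y \<Rightarrow> 'b::{banach,second_countable_topology}"
  assumes mom: "exp_moments b \<rho>" and \<Phi>[measurable]: "\<Phi> \<in> borel_measurable lam"
    and bnd: "\<And>y. norm (\<Phi> y) \<le> a + norm (T y)"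
  shows "bounded_linear (\<lambda>d. \<integral>y. ((d \<bullet> T y) * exp (b \<bullet> T y)) *\<^sub>R \<Phi> y \<partial>lam)"
proof -
  define D where "D y = (a + norm (T y)) * norm (T y) ^ 1 * exp (b \<bullet> T y + \<rho> * norm (T y))" for y
  note I = integrable_inner_exp_scaleR[OF mom \<Phi> bnd]
  have \<rho>: "\<rho> \<ge> 0" using mom unfolding exp_moments_def by simp
  show ?thesis
  proof (rule bounded_linear_intro[where K="\<integral>y. D y \<partial>lam"])
    fix x y
    show "(\<integral>z. (((x + y) \<bullet> T z) * exp (b \<bullet> T z)) *\<^sub>R \<Phi> z \<partial>lam)
        = (\<integral>z. ((x \<bullet> T z) * exp (b \<bullet> T z)) *\<^sub>R \<Phi> z \<partial>lam) + (\<integral>z. ((y \<bullet> T z) * exp (b \<bullet> T z)) *\<^sub>R \<Phi> z \<partial>lam)"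
      by (subst Bochner_Integration.integral_add[symmetric]) (auto intro: I simp: inner_add_left algebra_simps)
  next
    fix r x
    show "(\<integral>z. (((r *\<^sub>R x) \<bullet> T z) * exp (b \<bullet> T z)) *\<^sub>R \<Phi> z \<partial>lam)
        = r *\<^sub>R (\<integral>z. ((x \<bullet> T z) * exp (b \<bullet> T z)) *\<^sub>R \<Phi> z \<partial>lam)"
      by (subst integral_scaleR_right[symmetric]) (simp add: algebra_simps)
  next
    fix x
    have "norm (\<integral>y. ((x \<bullet> T y) * exp (b \<bullet> T y)) *\<^sub>R \<Phi> y \<partial>lam)
        \<le> (\<integral>y. norm (((x \<bullet> T y) * exp (b \<bullet> T y)) *\<^sub>R \<Phi> y) \<partial>lam)"
      by (rule integral_norm_bound)
    also have "\<dots> \<le> (\<integral>y. norm x * D y \<partial>lam)"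
    proof (rule integral_mono)
      show "integrable lam (\<lambda>y. norm (((x \<bullet> T y) * exp (b \<bullet> T y)) *\<^sub>R \<Phi> y))"
        using I by (rule integrable_norm)
      show "integrable lam (\<lambda>y. norm x * D y)"
        unfolding D_def by (intro integrable_mult_right integrable_affine_moment[OF mom])
      show "norm (((x \<bullet> T y) * exp (b \<bullet> T y)) *\<^sub>R \<Phi> y) \<le> norm x * D y" for y
        using norm_inner_exp_scaleR_le[OF \<rho> bnd] unfolding D_def .
    qed
    finally show "norm (\<integral>y. ((x \<bullet> T y) * exp (b \<bullet> T y)) *\<^sub>R \<Phi> y \<partial>lam) \<le> norm x * (\<integral>y. D y \<partial>lam)"
      by simp
  qed
qed

text \<open>Differentiation under the integral sign in the natural parameter; the second-order
  Taylor remainder of \<open>exp\<close> is dominated by the moments of \<open>exp_moments\<close>.\<close>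
lemma has_derivative_integral_exp_inner:
  fixes \<Phi> :: "'y \<Rightarrow> 'b::{banach,second_countable_topology}"
  assumes b: "b \<in> interior NS" and \<Phi>[measurable]: "\<Phi> \<in> borel_measurable lam"
    and bnd: "\<And>y. norm (\<Phi> y) \<le> a + norm (T y)"
  shows "((\<lambda>\<beta>. \<integral>y. exp (\<beta> \<bullet> T y) *\<^sub>R \<Phi> y \<partial>lam) has_derivative
          (\<lambda>d. \<integral>y. ((d \<bullet> T y) * exp (b \<bullet> T y)) *\<^sub>R \<Phi> y \<partial>lam)) (at b)"
proof -
  obtain \<rho> where mom: "exp_moments b \<rho>" using interior_nat_space_exp_moments[OF b] .
  then have \<rho>: "\<rho> > 0" unfolding exp_moments_def by simp
  define D where "D y = (a + norm (T y)) * norm (T y) ^ 2 * exp (b \<bullet> T y + \<rho> * norm (T y))" for y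
  have D: "integrable lam D" unfolding D_def by (rule integrable_affine_moment[OF mom])
  have "0 \<le> D y" for y
    using bnd[of y] unfolding D_def by (intro mult_nonneg_nonneg) (auto intro: order_trans[OF norm_ge_zero])
  then have D_nonneg: "0 \<le> (\<integral>y. D y \<partial>lam)" by (simp add: integral_nonneg_AE)
  note I1 = integrable_exp_inner_scaleR[OF mom \<Phi> bnd]
  note I2 = integrable_inner_exp_scaleR[OF mom \<Phi> bnd]
  show ?thesis
  proof (rule has_derivative_quadratic_remainder[OF bounded_linear_integral_inner_exp[OF mom \<Phi> bnd] \<rho> D_nonneg])
    fix \<beta> assume \<beta>: "norm (\<beta> - b) < \<rho>"
    define R where "R y = exp (\<beta> \<bullet> T y) *\<^sub>R \<Phi> y - exp (b \<bullet> T y) *\<^sub>R \<Phi> y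
                          - (((\<beta> - b) \<bullet> T y) * exp (b \<bullet> T y)) *\<^sub>R \<Phi> y" for y
    have b0: "norm (b - b) < \<rho>" using \<rho> by simp
    have "(\<integral>y. exp (\<beta> \<bullet> T y) *\<^sub>R \<Phi> y \<partial>lam) - (\<integral>y. exp (b \<bullet> T y) *\<^sub>R \<Phi> y \<partial>lam)
        - (\<integral>y. (((\<beta> - b) \<bullet> T y) * exp (b \<bullet> T y)) *\<^sub>R \<Phi> y \<partial>lam) = (\<integral>y. R y \<partial>lam)"
      unfolding R_def using I1[OF \<beta>] I1[OF b0] I2[of "\<beta> - b"]
      by (simp add: Bochner_Integration.integral_diff)
    also have "norm \<dots> \<le> (\<integral>y. norm (R y) \<partial>lam)"
      by (rule integral_norm_bound)
    also have "\<dots> \<le> (\<integral>y. (norm (\<beta> - b))\<^sup>2 * D y \<partial>lam)"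
      using I1[OF \<beta>] I1[OF b0] I2[of "\<beta> - b"] D \<beta> bnd
        norm_exp_inner_taylor_remainder_le[of \<beta> b \<rho> \<Phi> _ a]
      unfolding R_def D_def by (intro integral_mono) auto
    finally show "norm ((\<integral>y. exp (\<beta> \<bullet> T y) *\<^sub>R \<Phi> y \<partial>lam) - (\<integral>y. exp (b \<bullet> T y) *\<^sub>R \<Phi> y \<partial>lam)
        - (\<integral>y. (((\<beta> - b) \<bullet> T y) * exp (b \<bullet> T y)) *\<^sub>R \<Phi> y \<partial>lam))
        \<le> (\<integral>y. D y \<partial>lam) * (norm (\<beta> - b))\<^sup>2"
      by (simp add: mult.commute)
  qed
qed

lemma not_AE_False: "\<not> (AE y in lam. False)"
proof
  assume "AE y in lam. False"
  then have "AE y in lam. axis (undefined::'k) (1::real) \<bullet> T y = 0" by (rule AE_mp) simp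
  with expfam have "axis (undefined::'k) (1::real) = 0" unfolding expfam_stats_def by blast
  then show False by (simp add: axis_eq_0_iff)
qed

lemma integrable_exp: "b \<in> NS \<Longrightarrow> integrable lam (\<lambda>y. exp (b \<bullet> T y))"
  by (simp add: nat_space_def)

lemma Zf_pos:
  assumes "b \<in> NS"
  shows "Zf lam T b > 0"
proof -
  have i: "integrable lam (\<lambda>y. exp (b \<bullet> T y))" using integrable_exp[OF assms] .
  have "Zf lam T b \<ge> 0" unfolding Zf_def by (intro integral_nonneg_AE) auto
  moreover have "Zf lam T b \<noteq> 0"
  proof
    assume "Zf lam T b = 0"
    then have "AE y in lam. exp (b \<bullet> T y) = 0"
      using integral_nonneg_eq_0_iff_AE[OF i] unfolding Zf_def by auto
    then show False using not_AE_False by simp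
  qed
  ultimately show ?thesis by simp
qed

lemma dens_pos: "b \<in> NS \<Longrightarrow> dens lam T b y > 0"
  unfolding dens_def using Zf_pos by simp

lemma dens_measurable[measurable]: "dens lam T b \<in> borel_measurable lam"
  unfolding dens_def by measurable

lemma integrable_exp_scaleR_quadratic:
  fixes g :: "'y \<Rightarrow> 'b::{banach,second_countable_topology}"
  assumes b: "b \<in> interior NS" and [measurable]: "g \<in> borel_measurable lam"
    and bnd: "\<And>y. norm (g y) \<le> ca + cb * norm (T y) + cc * (norm (T y))\<^sup>2"
  shows "integrable lam (\<lambda>y. exp (b \<bullet> T y) *\<^sub>R g y)"
proof -
  obtain \<rho> where mom: "exp_moments b \<rho>" using interior_nat_space_exp_moments[OF b] .
  define E where "E y = exp (b \<bullet> T y + \<rho> * norm (T y))" for y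
  have M: "integrable lam (\<lambda>y. norm (T y) ^ n * E y)" for n
    using mom unfolding exp_moments_def E_def by blast
  show ?thesis
  proof (rule Bochner_Integration.integrable_bound)
    show "integrable lam (\<lambda>y. \<bar>ca\<bar> * (norm (T y) ^ 0 * E y) + \<bar>cb\<bar> * (norm (T y) ^ 1 * E y)
        + \<bar>cc\<bar> * (norm (T y) ^ 2 * E y))"
      by (intro Bochner_Integration.integrable_add integrable_mult_right M)
    show "AE y in lam. norm (exp (b \<bullet> T y) *\<^sub>R g y) \<le> norm (\<bar>ca\<bar> * (norm (T y) ^ 0 * E y)
        + \<bar>cb\<bar> * (norm (T y) ^ 1 * E y) + \<bar>cc\<bar> * (norm (T y) ^ 2 * E y))"
    proof (rule AE_I2)
      fix y
      have E0: "E y \<ge> 0" and e: "exp (b \<bullet> T y) \<le> E y"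
        unfolding E_def using mom by (auto simp: exp_moments_def)
      have "norm (g y) \<le> \<bar>ca\<bar> + \<bar>cb\<bar> * norm (T y) + \<bar>cc\<bar> * (norm (T y))\<^sup>2"
        using bnd[of y] abs_ge_self[of cb] abs_ge_self[of cc]
          mult_right_mono[of cb "\<bar>cb\<bar>" "norm (T y)"] mult_right_mono[of cc "\<bar>cc\<bar>" "(norm (T y))\<^sup>2"]
        by auto
      then have "exp (b \<bullet> T y) * norm (g y) \<le> E y * (\<bar>ca\<bar> + \<bar>cb\<bar> * norm (T y) + \<bar>cc\<bar> * (norm (T y))\<^sup>2)"
        by (rule mult_mono[OF e]) (use E0 in auto)
      then show "norm (exp (b \<bullet> T y) *\<^sub>R g y) \<le> norm (\<bar>ca\<bar> * (norm (T y) ^ 0 * E y)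
          + \<bar>cb\<bar> * (norm (T y) ^ 1 * E y) + \<bar>cc\<bar> * (norm (T y) ^ 2 * E y))"
        using E0 by (simp add: algebra_simps)
    qed
  qed measurable
qed

lemma integrable_dens_scaleR_quadratic:
  fixes g :: "'y \<Rightarrow> 'b::{banach,second_countable_topology}"
  assumes b: "b \<in> interior NS" and [measurable]: "g \<in> borel_measurable lam"
    and bnd: "\<And>y. norm (g y) \<le> ca + cb * norm (T y) + cc * (norm (T y))\<^sup>2"
  shows "integrable lam (\<lambda>y. dens lam T b y *\<^sub>R g y)"
  using integrable_scaleR_right[OF integrable_exp_scaleR_quadratic[OF assms], of "1 / Zf lam T b"]
  by (simp add: dens_def)

lemma integrable_dens_scaleR_centered:
  assumes b: "b \<in> interior NS"
  shows "integrable lam (\<lambda>y. (dens lam T b y * (h \<bullet> (T y - m))) *\<^sub>R (T y - m))"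
proof -
  have "integrable lam (\<lambda>y. dens lam T b y *\<^sub>R ((h \<bullet> (T y - m)) *\<^sub>R (T y - m)))"
  proof (rule integrable_dens_scaleR_quadratic[OF b])
    fix y
    have n: "norm (T y - m) \<le> norm m + norm (T y)"
      using norm_triangle_ineq4[of "T y" m] by simp
    have "norm ((h \<bullet> (T y - m)) *\<^sub>R (T y - m)) \<le> (norm h * norm (T y - m)) * norm (T y - m)"
      using Cauchy_Schwarz_ineq2[of h "T y - m"] by (simp add: mult_right_mono)
    also have "\<dots> \<le> (norm h * (norm m + norm (T y))) * (norm m + norm (T y))"
      using n by (intro mult_mono mult_left_mono) auto
    finally show "norm ((h \<bullet> (T y - m)) *\<^sub>R (T y - m))
        \<le> norm h * (norm m)\<^sup>2 + 2 * norm h * norm m * norm (T y) + norm h * (norm (T y))\<^sup>2"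
      by (simp add: algebra_simps power2_eq_square)
  qed measurable
  then show ?thesis by simp
qed

definition nat_cov :: "real^'k \<Rightarrow> real^'k^'k" where
  "nat_cov b = (\<chi> i j. \<integral>y. (T y $ i - meanT lam T b $ i) * (T y $ j - meanT lam T b $ j) * dens lam T b y \<partial>lam)"

lemma nat_cov_symmetric: "transpose (nat_cov b) = nat_cov b"
  unfolding nat_cov_def transpose_def by (simp add: vec_eq_iff mult_ac)

lemma nat_cov_mult:
  assumes b: "b \<in> interior NS"
  shows "nat_cov b *v h
    = (\<integral>y. (dens lam T b y * (h \<bullet> (T y - meanT lam T b))) *\<^sub>R (T y - meanT lam T b) \<partial>lam)"
proof -
  define m where "m = meanT lam T b"
  define V where "V y = (dens lam T b y * (h \<bullet> (T y - m))) *\<^sub>R (T y - m)" for y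
  have V: "integrable lam V" unfolding V_def by (rule integrable_dens_scaleR_centered[OF b])
  have entry: "integrable lam (\<lambda>y. (T y $ i - m $ i) * (T y $ j - m $ j) * dens lam T b y)" for i j
  proof -
    have "integrable lam (\<lambda>y. dens lam T b y *\<^sub>R ((T y $ i - m $ i) * (T y $ j - m $ j)))"
    proof (rule integrable_dens_scaleR_quadratic[OF b, where ca="(norm m)\<^sup>2" and cb="2 * norm m" and cc=1])
      fix y
      have "\<bar>T y $ l - m $ l\<bar> \<le> norm m + norm (T y)" for l
        using component_le_norm_cart[of "T y - m" l] norm_triangle_ineq4[of "T y" m] by simp
      then have "\<bar>(T y $ i - m $ i) * (T y $ j - m $ j)\<bar> \<le> (norm m + norm (T y)) * (norm m + norm (T y))"
        by (simp add: abs_mult mult_mono)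
      then show "norm ((T y $ i - m $ i) * (T y $ j - m $ j)) \<le> (norm m)\<^sup>2 + 2 * norm m * norm (T y) + 1 * (norm (T y))\<^sup>2"
        by (simp add: algebra_simps power2_eq_square)
    qed measurable
    then show ?thesis by (simp add: mult.commute)
  qed
  have "(nat_cov b *v h) $ i = (\<integral>y. V y \<partial>lam) $ i" for i
  proof -
    have "(nat_cov b *v h) $ i = (\<Sum>j\<in>UNIV. (\<integral>y. (T y $ i - m $ i) * (T y $ j - m $ j) * dens lam T b y * h $ j \<partial>lam))"
      unfolding nat_cov_def m_def by (simp add: matrix_vector_mult_def)
    also have "\<dots> = (\<integral>y. (\<Sum>j\<in>UNIV. (T y $ i - m $ i) * (T y $ j - m $ j) * dens lam T b y * h $ j) \<partial>lam)"
      by (rule Bochner_Integration.integral_sum[symmetric]) (use entry in auto)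
    also have "\<dots> = (\<integral>y. V y $ i \<partial>lam)"
      unfolding V_def by (rule Bochner_Integration.integral_cong)
        (auto simp: inner_vec_def sum_distrib_left sum_distrib_right mult_ac)
    also have "\<dots> = (\<integral>y. V y \<bullet> axis i 1 \<partial>lam)" by (simp add: cart_eq_inner_axis)
    also have "\<dots> = (\<integral>y. V y \<partial>lam) \<bullet> axis i 1" by (rule integral_inner_left) (use V in auto)
    also have "\<dots> = (\<integral>y. V y \<partial>lam) $ i" by (simp add: cart_eq_inner_axis)
    finally show ?thesis .
  qed
  then show ?thesis unfolding m_def[symmetric] V_def[symmetric] by (simp add: vec_eq_iff)
qed

lemma nat_cov_quadratic:
  assumes b: "b \<in> interior NS"
  shows "a \<bullet> (nat_cov b *v h)
    = (\<integral>y. dens lam T b y * (h \<bullet> (T y - meanT lam T b)) * (a \<bullet> (T y - meanT lam T b)) \<partial>lam)"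
  unfolding nat_cov_mult[OF b]
  by (subst integral_inner_right[symmetric]) (simp_all add: integrable_dens_scaleR_centered[OF b])

lemma nat_cov_sym_pos_def:
  assumes b: "b \<in> interior NS"
  shows "sym_pos_def (nat_cov b)"
  unfolding sym_pos_def_def
proof (intro conjI allI impI nat_cov_symmetric)
  fix h :: "real^'k" assume h: "h \<noteq> 0"
  define m where "m = meanT lam T b"
  define q where "q y = dens lam T b y * (h \<bullet> (T y - m))\<^sup>2" for y
  have hq: "h \<bullet> (nat_cov b *v h) = (\<integral>y. q y \<partial>lam)"
    unfolding nat_cov_quadratic[OF b] q_def m_def by (simp add: power2_eq_square mult_ac)
  have "integrable lam (\<lambda>y. h \<bullet> ((dens lam T b y * (h \<bullet> (T y - m))) *\<^sub>R (T y - m)))"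
    by (rule integrable_inner_right[OF integrable_dens_scaleR_centered[OF b]])
  then have i: "integrable lam q" unfolding q_def by (simp add: power2_eq_square mult_ac)
  have dp: "0 < dens lam T b y" for y using dens_pos interior_subset b by blast
  then have dp_ne: "dens lam T b y \<noteq> 0" for y by (metis less_irrefl)
  have nn: "AE y in lam. 0 \<le> q y" unfolding q_def using dp by (simp add: less_imp_le)
  have "h \<bullet> (nat_cov b *v h) \<noteq> 0"
  proof
    assume "h \<bullet> (nat_cov b *v h) = 0"
    then have "AE y in lam. q y = 0" using integral_nonneg_eq_0_iff_AE[OF i nn] hq by simp
    then have "AE y in lam. h \<bullet> T y = h \<bullet> m"
      by (rule AE_mp) (auto simp: q_def inner_diff_right dp_ne)
    with expfam have "h = 0" unfolding expfam_stats_def by blast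
    with h show False by simp
  qed
  moreover have "h \<bullet> (nat_cov b *v h) \<ge> 0" unfolding hq by (rule integral_nonneg_AE[OF nn])
  ultimately show "h \<bullet> (nat_cov b *v h) > 0" by simp
qed

lemma Zf_has_derivative:
  assumes b: "b \<in> interior NS"
  shows "(Zf lam T has_derivative (\<lambda>d. \<integral>y. (d \<bullet> T y) * exp (b \<bullet> T y) \<partial>lam)) (at b)"
  using has_derivative_integral_exp_inner[OF b, of "\<lambda>_. 1::real" 1]
  by (simp add: Zf_def[abs_def])

lemma meanT_eq_integral_exp:
  "meanT lam T \<beta> = (1 / Zf lam T \<beta>) *\<^sub>R (\<integral>y. exp (\<beta> \<bullet> T y) *\<^sub>R T y \<partial>lam)"
proof -
  have "meanT lam T \<beta> = (\<integral>y. (1 / Zf lam T \<beta>) *\<^sub>R (exp (\<beta> \<bullet> T y) *\<^sub>R T y) \<partial>lam)"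
    unfolding meanT_def by (rule Bochner_Integration.integral_cong) (auto simp: dens_def)
  then show ?thesis by (simp only: integral_scaleR_right)
qed

lemma integrable_exp_scaleR_T: "b \<in> interior NS \<Longrightarrow> integrable lam (\<lambda>y. exp (b \<bullet> T y) *\<^sub>R T y)"
  by (rule integrable_exp_scaleR_quadratic[where ca=0 and cb=1 and cc=0]) auto

lemma meanT_centered:
  assumes \<beta>: "\<beta> \<in> interior NS"
  shows "meanT lam T \<beta> = m + (1 / Zf lam T \<beta>) *\<^sub>R (\<integral>y. exp (\<beta> \<bullet> T y) *\<^sub>R (T y - m) \<partial>lam)"
proof -
  have NS: "\<beta> \<in> NS" using \<beta> interior_subset by blast
  have "(\<integral>y. exp (\<beta> \<bullet> T y) *\<^sub>R (T y - m) \<partial>lam)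
      = (\<integral>y. exp (\<beta> \<bullet> T y) *\<^sub>R T y \<partial>lam) - (\<integral>y. exp (\<beta> \<bullet> T y) *\<^sub>R m \<partial>lam)"
    unfolding scaleR_diff_right using integrable_exp_scaleR_T[OF \<beta>] integrable_exp[OF NS]
    by (intro Bochner_Integration.integral_diff integrable_scaleR_left)
  also have "(\<integral>y. exp (\<beta> \<bullet> T y) *\<^sub>R m \<partial>lam) = Zf lam T \<beta> *\<^sub>R m"
    unfolding Zf_def by (rule integral_scaleR_left) (use integrable_exp[OF NS] in simp)
  finally show ?thesis
    using Zf_pos[OF NS] unfolding meanT_eq_integral_exp[of \<beta>] by (simp add: scaleR_diff_right)
qed

lemma integral_exp_scaleR_centered:
  assumes b: "b \<in> interior NS"
  shows "(\<integral>y. exp (b \<bullet> T y) *\<^sub>R (T y - meanT lam T b) \<partial>lam) = 0"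
proof -
  have "Zf lam T b > 0" using Zf_pos b interior_subset by blast
  then show ?thesis using meanT_centered[OF b, of "meanT lam T b"] by simp
qed

lemma nat_cov_mult_eq_tilted_integral:
  assumes b: "b \<in> interior NS"
  shows "nat_cov b *v h
    = (1 / Zf lam T b) *\<^sub>R (\<integral>y. ((h \<bullet> T y) * exp (b \<bullet> T y)) *\<^sub>R (T y - meanT lam T b) \<partial>lam)"
proof -
  define m where "m = meanT lam T b"
  have i2: "integrable lam (\<lambda>y. ((h \<bullet> m) / Zf lam T b) *\<^sub>R (exp (b \<bullet> T y) *\<^sub>R (T y - m)))"
  proof (intro integrable_scaleR_right)
    have "b \<in> NS" using b interior_subset by blast
    then show "integrable lam (\<lambda>y. exp (b \<bullet> T y) *\<^sub>R (T y - m))"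
      unfolding scaleR_diff_right
      by (intro Bochner_Integration.integrable_diff integrable_exp_scaleR_T[OF b]
          integrable_scaleR_left integrable_exp)
  qed
  have "(1 / Zf lam T b) *\<^sub>R (\<integral>y. ((h \<bullet> T y) * exp (b \<bullet> T y)) *\<^sub>R (T y - m) \<partial>lam)
      = (\<integral>y. (dens lam T b y * (h \<bullet> (T y - m))) *\<^sub>R (T y - m)
            + ((h \<bullet> m) / Zf lam T b) *\<^sub>R (exp (b \<bullet> T y) *\<^sub>R (T y - m)) \<partial>lam)"
    unfolding integral_scaleR_right[symmetric]
  proof (rule Bochner_Integration.integral_cong[OF refl])
    fix y
    have "dens lam T b y * (h \<bullet> (T y - m)) + (h \<bullet> m) / Zf lam T b * exp (b \<bullet> T y)
        = 1 / Zf lam T b * ((h \<bullet> T y) * exp (b \<bullet> T y))"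
      by (simp add: dens_def inner_diff_right add_divide_distrib[symmetric] algebra_simps)
    then show "(1 / Zf lam T b) *\<^sub>R (((h \<bullet> T y) * exp (b \<bullet> T y)) *\<^sub>R (T y - m))
        = (dens lam T b y * (h \<bullet> (T y - m))) *\<^sub>R (T y - m)
          + ((h \<bullet> m) / Zf lam T b) *\<^sub>R (exp (b \<bullet> T y) *\<^sub>R (T y - m))"
      by (simp only: scaleR_scaleR scaleR_add_left[symmetric])
  qed
  also have "\<dots> = (\<integral>y. (dens lam T b y * (h \<bullet> (T y - m))) *\<^sub>R (T y - m) \<partial>lam)
      + (\<integral>y. ((h \<bullet> m) / Zf lam T b) *\<^sub>R (exp (b \<bullet> T y) *\<^sub>R (T y - m)) \<partial>lam)"
    by (rule Bochner_Integration.integral_add[OF integrable_dens_scaleR_centered[OF b] i2])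
  also have "\<dots> = nat_cov b *v h + ((h \<bullet> m) / Zf lam T b) *\<^sub>R (\<integral>y. exp (b \<bullet> T y) *\<^sub>R (T y - m) \<partial>lam)"
    unfolding nat_cov_mult[OF b] m_def[symmetric] integral_scaleR_right ..
  finally show ?thesis unfolding m_def integral_exp_scaleR_centered[OF b] by simp
qed

lemma meanT_has_derivative:
  assumes b: "b \<in> interior NS"
  shows "(meanT lam T has_derivative (\<lambda>h. nat_cov b *v h)) (at b)"
proof -
  define m where "m = meanT lam T b"
  define Nc where "Nc \<beta> = (\<integral>y. exp (\<beta> \<bullet> T y) *\<^sub>R (T y - m) \<partial>lam)" for \<beta>
  define DN where "DN d = (\<integral>y. ((d \<bullet> T y) * exp (b \<bullet> T y)) *\<^sub>R (T y - m) \<partial>lam)" for d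
  have z: "Zf lam T b > 0" using Zf_pos b interior_subset by blast
  have dN: "(Nc has_derivative DN) (at b)"
  proof -
    have "norm (T y - m) \<le> norm m + norm (T y)" for y using norm_triangle_ineq4[of "T y" m] by simp
    then show ?thesis unfolding Nc_def[abs_def] DN_def[abs_def]
      by (intro has_derivative_integral_exp_inner[OF b, where a="norm m"]) auto
  qed
  have Nb: "Nc b = 0" unfolding Nc_def m_def by (rule integral_exp_scaleR_centered[OF b])
  have "((\<lambda>\<beta>. m + inverse (Zf lam T \<beta>) *\<^sub>R Nc \<beta>) has_derivative
      (\<lambda>h. 0 + (inverse (Zf lam T b) *\<^sub>R DN h
          + (- (inverse (Zf lam T b) * (\<integral>y. (h \<bullet> T y) * exp (b \<bullet> T y) \<partial>lam) * inverse (Zf lam T b))) *\<^sub>R Nc b))) (at b)"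
    using z by (intro has_derivative_add has_derivative_const has_derivative_scaleR dN
        Deriv.has_derivative_inverse Zf_has_derivative[OF b]) auto
  then have "((\<lambda>\<beta>. m + inverse (Zf lam T \<beta>) *\<^sub>R Nc \<beta>) has_derivative (\<lambda>h. (1 / Zf lam T b) *\<^sub>R DN h)) (at b)"
    unfolding Nb by (simp add: divide_inverse)
  then have "(meanT lam T has_derivative (\<lambda>h. (1 / Zf lam T b) *\<^sub>R DN h)) (at b)"
  proof (rule has_derivative_transform_within_open[OF _ open_interior b])
    show "m + inverse (Zf lam T x) *\<^sub>R Nc x = meanT lam T x" if "x \<in> interior NS" for x
      using meanT_centered[OF that, of m] unfolding Nc_def by (simp add: divide_inverse)
  qed
  then show ?thesis
    unfolding DN_def m_def nat_cov_mult_eq_tilted_integral[OF b] .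
qed

lemma convex_nat_space: "convex NS"
  unfolding convex_def
proof (intro ballI allI impI)
  fix x y :: "real^'k" and u v :: real
  assume x: "x \<in> NS" and y: "y \<in> NS" and uv: "0 \<le> u" "0 \<le> v" "u + v = 1"
  show "u *\<^sub>R x + v *\<^sub>R y \<in> NS" unfolding nat_space_def
  proof (rule CollectI, rule Bochner_Integration.integrable_bound)
    show "integrable lam (\<lambda>z. exp (x \<bullet> T z) + exp (y \<bullet> T z))"
      using integrable_exp[OF x] integrable_exp[OF y] by (rule Bochner_Integration.integrable_add)
    show "(\<lambda>z. exp ((u *\<^sub>R x + v *\<^sub>R y) \<bullet> T z)) \<in> borel_measurable lam" by measurable
    show "AE z in lam. norm (exp ((u *\<^sub>R x + v *\<^sub>R y) \<bullet> T z)) \<le> norm (exp (x \<bullet> T z) + exp (y \<bullet> T z))"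
    proof (rule AE_I2)
      fix z
      define M where "M = max (x \<bullet> T z) (y \<bullet> T z)"
      have "(u *\<^sub>R x + v *\<^sub>R y) \<bullet> T z = u * (x \<bullet> T z) + v * (y \<bullet> T z)" by (simp add: inner_add_left)
      also have "\<dots> \<le> u * M + v * M" unfolding M_def using uv by (intro add_mono mult_left_mono) auto
      also have "\<dots> = M" using uv by (simp add: distrib_right[symmetric])
      finally have "exp ((u *\<^sub>R x + v *\<^sub>R y) \<bullet> T z) \<le> exp M" by simp
      also have "\<dots> \<le> exp (x \<bullet> T z) + exp (y \<bullet> T z)" unfolding M_def by (auto simp: max_def)
      finally show "norm (exp ((u *\<^sub>R x + v *\<^sub>R y) \<bullet> T z)) \<le> norm (exp (x \<bullet> T z) + exp (y \<bullet> T z))"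
        by simp
    qed
  qed
qed

text \<open>The mean map is the gradient of the strictly convex \<open>ln Zf\<close>: along a segment its
  directional derivative is a positive definite quadratic form.\<close>
lemma inj_on_meanT: "inj_on (meanT lam T) (interior NS)"
proof (rule inj_onI, rule ccontr)
  fix b1 b2 assume b1: "b1 \<in> interior NS" and b2: "b2 \<in> interior NS"
    and eq: "meanT lam T b1 = meanT lam T b2" and ne: "b1 \<noteq> b2"
  define d where "d = b2 - b1"
  have d0: "d \<noteq> 0" using ne unfolding d_def by simp
  define p where "p s = b1 + s *\<^sub>R d" for s :: real
  have cvx: "convex (interior NS)" by (rule convex_interior[OF convex_nat_space])
  have pin: "p s \<in> interior NS" if "0 \<le> s" "s \<le> 1" for s
  proof -
    have "(1 - s) *\<^sub>R b1 + s *\<^sub>R b2 \<in> interior NS"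
      using cvx b1 b2 that unfolding convex_def by auto
    moreover have "(1 - s) *\<^sub>R b1 + s *\<^sub>R b2 = p s" unfolding p_def d_def by (simp add: algebra_simps)
    ultimately show ?thesis by simp
  qed
  define \<phi> where "\<phi> s = meanT lam T (p s) \<bullet> d" for s
  have dphi: "DERIV \<phi> s :> d \<bullet> (nat_cov (p s) *v d)" if "0 \<le> s" "s \<le> 1" for s
  proof -
    have dp: "(p has_derivative (\<lambda>t. t *\<^sub>R d)) (at s)"
      unfolding p_def[abs_def] by (auto intro!: derivative_eq_intros)
    have dm: "((\<lambda>s. meanT lam T (p s)) has_derivative (\<lambda>t. nat_cov (p s) *v (t *\<^sub>R d))) (at s)"
      by (rule has_derivative_compose[OF dp meanT_has_derivative[OF pin[OF that]]])
    have "(\<phi> has_derivative (\<lambda>t. (nat_cov (p s) *v (t *\<^sub>R d)) \<bullet> d)) (at s)"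
      unfolding \<phi>_def[abs_def]
      by (rule bounded_linear.has_derivative[OF bounded_linear_inner_left dm])
    moreover have "(\<lambda>t. (nat_cov (p s) *v (t *\<^sub>R d)) \<bullet> d) = (*) (d \<bullet> (nat_cov (p s) *v d))"
      by (auto simp: fun_eq_iff matrix_vector_mult_scaleR inner_commute)
    ultimately show ?thesis unfolding has_field_derivative_def by simp
  qed
  have cont: "continuous_on {0..1} \<phi>"
    using dphi by (intro continuous_at_imp_continuous_on ballI) (auto intro: DERIV_isCont)
  have dif: "\<phi> differentiable (at x)" if "0 < x" "x < 1" for x
    using dphi[of x] that by (auto simp: real_differentiable_def)
  have "\<exists>l z. 0 < z \<and> z < 1 \<and> DERIV \<phi> z :> l \<and> \<phi> 1 - \<phi> 0 = (1 - 0) * l"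
    by (rule MVT) (use cont dif in auto)
  then obtain l z where z: "0 < z" "z < 1" and dz: "DERIV \<phi> z :> l" and mv: "\<phi> 1 - \<phi> 0 = (1 - 0) * l"
    by blast
  have l: "l = d \<bullet> (nat_cov (p z) *v d)" using DERIV_unique[OF dz dphi[of z]] z by simp
  have "l > 0" unfolding l using nat_cov_sym_pos_def[OF pin[of z]] z d0 unfolding sym_pos_def_def by auto
  moreover have "\<phi> 1 = \<phi> 0" unfolding \<phi>_def p_def d_def using eq by simp
  ultimately show False using mv by simp
qed

lemma natpar_meanT: assumes "b \<in> interior NS" shows "natpar lam T (meanT lam T b) = b"
  unfolding natpar_def
  by (rule the_equality) (use assms inj_on_meanT in \<open>auto simp: inj_on_def\<close>)

lemma natpar_in_interior_meanT_natpar: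
  assumes "yh \<in> mean_dom lam T"
  shows natpar_in_interior: "natpar lam T yh \<in> interior NS"
    and meanT_natpar: "meanT lam T (natpar lam T yh) = yh"
proof -
  obtain b where b: "b \<in> interior NS" "yh = meanT lam T b" using assms unfolding mean_dom_def by auto
  then show "natpar lam T yh \<in> interior NS" "meanT lam T (natpar lam T yh) = yh"
    using natpar_meanT[OF b(1)] by auto
qed

lemma natpar_has_derivative:
  assumes yh: "yh \<in> mean_dom lam T"
  shows "(natpar lam T has_derivative (\<lambda>v. matrix_inv (nat_cov (natpar lam T yh)) *v v)) (at yh)"
proof -
  define b where "b = natpar lam T yh"
  have bin: "b \<in> interior NS" and mb: "meanT lam T b = yh" using natpar_in_interior_meanT_natpar[OF yh] unfolding b_def by auto
  have inv: "invertible (nat_cov b)" by (rule sym_pos_def_invertible[OF nat_cov_sym_pos_def[OF bin]])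
  have "(natpar lam T has_derivative (\<lambda>v. matrix_inv (nat_cov b) *v v)) (at (meanT lam T b))"
  proof (rule has_derivative_inverse_strong[OF open_interior bin])
    show "continuous_on (interior NS) (meanT lam T)"
      by (intro continuous_at_imp_continuous_on ballI has_derivative_continuous[OF meanT_has_derivative])
    show "\<And>x. x \<in> interior NS \<Longrightarrow> natpar lam T (meanT lam T x) = x" by (rule natpar_meanT)
    show "(meanT lam T has_derivative (\<lambda>h. nat_cov b *v h)) (at b)" by (rule meanT_has_derivative[OF bin])
    show "(\<lambda>h. nat_cov b *v h) \<circ> (\<lambda>v. matrix_inv (nat_cov b) *v v) = id"
      using matrix_inv_right[OF inv] by (auto simp: fun_eq_iff matrix_vector_mul_assoc)
  qed
  then show ?thesis using mb unfolding b_def by simp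
qed

lemma ln_dens_has_derivative:
  assumes b: "b \<in> interior NS"
  shows "((\<lambda>\<beta>. ln (dens lam T \<beta> y0)) has_derivative (\<lambda>d. d \<bullet> (T y0 - meanT lam T b))) (at b)"
proof -
  have z: "Zf lam T b > 0" using Zf_pos b interior_subset by blast
  define DZ where "DZ d = (\<integral>y. (d \<bullet> T y) * exp (b \<bullet> T y) \<partial>lam)" for d
  have "DZ d * inverse (Zf lam T b) = d \<bullet> meanT lam T b" for d
  proof -
    have "d \<bullet> (\<integral>y. exp (b \<bullet> T y) *\<^sub>R T y \<partial>lam) = (\<integral>y. d \<bullet> (exp (b \<bullet> T y) *\<^sub>R T y) \<partial>lam)"
      by (rule integral_inner_right[symmetric]) (use integrable_exp_scaleR_T[OF b] in simp)
    then show ?thesis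
      unfolding meanT_eq_integral_exp DZ_def by (simp add: divide_inverse mult.commute)
  qed
  moreover have "((\<lambda>\<beta>. ln (Zf lam T \<beta>)) has_derivative (\<lambda>d. DZ d * inverse (Zf lam T b))) (at b)"
    unfolding DZ_def using has_derivative_ln[OF z Zf_has_derivative[OF b]] .
  moreover have "((\<lambda>\<beta>. \<beta> \<bullet> T y0) has_derivative (\<lambda>d. d \<bullet> T y0)) (at b)"
    by (rule bounded_linear.has_derivative[OF bounded_linear_inner_left has_derivative_ident])
  ultimately have "((\<lambda>\<beta>. \<beta> \<bullet> T y0 - ln (Zf lam T \<beta>)) has_derivative
      (\<lambda>d. d \<bullet> (T y0 - meanT lam T b))) (at b)"
    by (simp add: inner_diff_right has_derivative_diff)
  then show ?thesis
  proof (rule has_derivative_transform_within_open[OF _ open_interior b])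
    fix x assume "x \<in> interior NS"
    then have "Zf lam T x > 0" using Zf_pos interior_subset by blast
    then show "x \<bullet> T y0 - ln (Zf lam T x) = ln (dens lam T x y0)"
      unfolding dens_def by (simp add: ln_div)
  qed
qed

lemma covT_eq_nat_cov: "yh \<in> mean_dom lam T \<Longrightarrow> covT lam T yh = nat_cov (natpar lam T yh)"
  unfolding covT_def nat_cov_def pobs_def using meanT_natpar by simp

lemma covT_sym_pos_def: "yh \<in> mean_dom lam T \<Longrightarrow> sym_pos_def (covT lam T yh)"
  by (simp add: covT_eq_nat_cov nat_cov_sym_pos_def natpar_in_interior)

lemma ln_pobs_has_derivative:
  assumes yh: "yh \<in> mean_dom lam T"
  shows "((\<lambda>z. ln (pobs lam T z y0)) has_derivative
          (\<lambda>v. (T y0 - yh) \<bullet> (matrix_inv (covT lam T yh) *v v))) (at yh)"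
proof -
  define b where "b = natpar lam T yh"
  have b: "b \<in> interior NS" and mb: "meanT lam T b = yh"
    using natpar_in_interior_meanT_natpar[OF yh] unfolding b_def by auto
  have "((\<lambda>z. ln (dens lam T (natpar lam T z) y0)) has_derivative
      (\<lambda>v. (matrix_inv (nat_cov b) *v v) \<bullet> (T y0 - meanT lam T b))) (at yh)"
    using has_derivative_compose[OF natpar_has_derivative[OF yh] ln_dens_has_derivative[OF b[unfolded b_def]]]
    unfolding b_def .
  then show ?thesis
    unfolding pobs_def covT_eq_nat_cov[OF yh] mb using b_def by (simp add: inner_commute)
qed

lemma integral_score_products:
  assumes yh: "yh \<in> mean_dom lam T"
  shows "(\<integral>y. ((T y - yh) \<bullet> a) * ((T y - yh) \<bullet> c) * pobs lam T yh y \<partial>lam) = a \<bullet> (covT lam T yh *v c)"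
proof -
  define b where "b = natpar lam T yh"
  have b: "b \<in> interior NS" and mb: "meanT lam T b = yh"
    using natpar_in_interior_meanT_natpar[OF yh] unfolding b_def by auto
  show ?thesis
    unfolding covT_eq_nat_cov[OF yh] b_def[symmetric] nat_cov_quadratic[OF b] mb
    by (rule Bochner_Integration.integral_cong) (auto simp: pobs_def b_def inner_commute mult_ac)
qed

end

locale trajectory_model = exp_family lam T
  for lam :: "'y measure" and T :: "'y \<Rightarrow> real^'k" +
  fixes f :: "real^'n \<Rightarrow> 'u::euclidean_space \<Rightarrow> real^'n"
    and h :: "real^'n \<Rightarrow> 'u \<Rightarrow> real^'k"
    and u :: "nat \<Rightarrow> 'u"
  assumes smooth_h: "smooth_map (\<lambda>(s, v). h s v)"
    and diffeo_f: "\<forall>t\<ge>1. diffeo (\<lambda>s. f s (u t))"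
    and h_dom: "\<forall>s v. h s v \<in> mean_dom lam T"
begin

lemma flow_bij: "bij (\<lambda>s. f s (u (Suc k)))"
  using diffeo_f unfolding diffeo_def by auto

lemma flow_jac_invertible: "invertible (jac (\<lambda>x. f x (u (Suc k))) z)"
  using diffeo_f by (intro diffeo_jac_invertible) auto

lemma score_eq:
  fixes ss :: "nat \<Rightarrow> real^'n" and t :: nat
  defines "H \<equiv> jac (\<lambda>x. h x (u t)) (ss t)"
    and "R \<equiv> covT lam T (h (ss t) (u t))"
  shows "score h u lam T t y0 ss v = (T y0 - h (ss t) (u t)) \<bullet> (matrix_inv R *v (H *v v t))"
proof -
  have "((\<lambda>\<theta>. ln (pobs lam T (h \<theta> (u t)) y0)) has_derivative
      (\<lambda>d. (T y0 - h (ss t) (u t)) \<bullet> (matrix_inv R *v (H *v d)))) (at (ss t))"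
    unfolding H_def R_def
    using has_derivative_compose[OF jac_has_derivative[OF smooth_map_partial_differentiable[OF smooth_h]]
        ln_pobs_has_derivative[OF h_dom[rule_format]]] .
  then show ?thesis unfolding score_def Phi_def by (simp add: frechet_derivative_at[symmetric])
qed

lemma coord_covec_score:
  fixes ss :: "nat \<Rightarrow> real^'n" and t :: nat
  defines "H \<equiv> jac (\<lambda>x. h x (u t)) (ss t)"
    and "R \<equiv> covT lam T (h (ss t) (u t))"
  shows "coord_covec f u t ss (score h u lam T t y0 ss)
    = transpose H *v (matrix_inv R *v (T y0 - h (ss t) (u t)))"
proof (rule coord_covec_eqI[of f u, OF flow_jac_invertible])
  have Ri: "transpose (matrix_inv R) = matrix_inv R"
    using covT_sym_pos_def[OF h_dom[rule_format]] sym_pos_def_matrix_inv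
    unfolding R_def sym_pos_def_def by blast
  fix v
  show "score h u lam T t y0 ss v = (transpose H *v (matrix_inv R *v (T y0 - h (ss t) (u t)))) \<bullet> v t"
    unfolding score_eq H_def[symmetric] R_def[symmetric] inner_matrix_vector_transpose Ri
    by (simp add: matrix_vector_inner_transpose inner_commute)
qed

lemma coord_tensor_fisher:
  fixes ss :: "nat \<Rightarrow> real^'n" and t :: nat
  defines "H \<equiv> jac (\<lambda>x. h x (u t)) (ss t)"
    and "R \<equiv> covT lam T (h (ss t) (u t))"
  shows "coord_tensor f u t ss (fisher h u lam T t ss) = transpose H ** matrix_inv R ** H"
proof (rule coord_tensor_eqI[of f u, OF flow_jac_invertible])
  have dom: "h (ss t) (u t) \<in> mean_dom lam T" using h_dom by simp
  have iR: "invertible R" unfolding R_def by (rule sym_pos_def_invertible[OF covT_sym_pos_def[OF dom]])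
  have Ri: "transpose (matrix_inv R) = matrix_inv R"
    using covT_sym_pos_def[OF dom] sym_pos_def_matrix_inv unfolding R_def sym_pos_def_def by blast
  fix v w :: "nat \<Rightarrow> real^'n"
  define a where "a = matrix_inv R *v (H *v v t)"
  define c where "c = matrix_inv R *v (H *v w t)"
  have "fisher h u lam T t ss v w
      = (\<integral>y0. ((T y0 - h (ss t) (u t)) \<bullet> a) * ((T y0 - h (ss t) (u t)) \<bullet> c)
          * pobs lam T (h (ss t) (u t)) y0 \<partial>lam)"
    unfolding fisher_def score_eq frak_p_def Phi_def a_def c_def H_def R_def ..
  also have "\<dots> = a \<bullet> (R *v c)" unfolding R_def by (rule integral_score_products[OF dom])
  also have "\<dots> = v t \<bullet> ((transpose H ** matrix_inv R ** H) *v w t)"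
    unfolding a_def c_def matrix_inv_vector_right[OF iR]
    by (simp add: matrix_vector_inner_transpose Ri matrix_vector_mul_assoc[symmetric]
        del: transpose_matrix_vector)
  finally show "fisher h u lam T t ss v w = v t \<bullet> ((transpose H ** matrix_inv R ** H) *v w t)" .
qed

end

locale fading_memory_correspondence = trajectory_model lam T f h u
  for lam :: "'y measure" and T :: "'y \<Rightarrow> real^'k"
    and f :: "real^'n \<Rightarrow> 'u::euclidean_space \<Rightarrow> real^'n" and h and u +
  fixes y :: "nat \<Rightarrow> 'y" and \<alpha> \<eta> \<gamma> :: "nat \<Rightarrow> real"
    and s0 :: "real^'n" and P0 J0 :: "real^'n^'n" and ss0 :: "nat \<Rightarrow> real^'n"
  assumes alpha_nonneg: "\<forall>t. \<alpha> t \<ge> 0"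
    and J0_spd: "sym_pos_def J0"
    and eta0_pos: "\<eta> 0 > 0"
    and ss0_traj: "ss0 \<in> traj f u"
    and ss0_init: "ss0 0 = s0"
    and P0_J0: "P0 = \<eta> 0 *\<^sub>R matrix_inv J0"
    and gamma_eta: "\<forall>t\<ge>1. \<gamma> t = \<eta> t"
    and eta_rec: "\<forall>t\<ge>1. 1 / \<eta> t = (1 / (1 + \<alpha> t)) * (1 / \<eta> (t - 1)) + 1"
begin

abbreviation "ng t \<equiv> ongd f h u lam T y \<eta> \<gamma> ss0 J0 t"
abbreviation "kf t \<equiv> ekf f h u lam T y \<alpha> s0 P0 t"

definition ongd_tracks_ekf :: "nat \<Rightarrow> bool" where
  "ongd_tracks_ekf t \<longleftrightarrow> (\<exists>ss J. ng t = (ss, tensor_of_coord t J) \<and> ss \<in> traj f u \<and>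
      kf t = (ss t, \<eta> t *\<^sub>R matrix_inv J) \<and> sym_pos_def J \<and> \<eta> t > 0)"

lemma ongd_tracks_ekf_0: "ongd_tracks_ekf 0"
  unfolding ongd_tracks_ekf_def using ss0_traj ss0_init P0_J0 J0_spd eta0_pos by auto

lemma ongd_tracks_ekf_Suc:
  assumes "ongd_tracks_ekf t"
  shows "ongd_tracks_ekf (Suc t)"
proof -
  obtain ss J where ng: "ng t = (ss, tensor_of_coord t J)" and ss: "ss \<in> traj f u"
    and kf: "kf t = (ss t, \<eta> t *\<^sub>R matrix_inv J)" and J: "sym_pos_def J" and eta: "\<eta> t > 0"
    using assms unfolding ongd_tracks_ekf_def by blast
  define F where "F = jac (\<lambda>x. f x (u (Suc t))) (ss t)"
  define spred where "spred = f (ss t) (u (Suc t))"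
  define H where "H = jac (\<lambda>x. h x (u (Suc t))) spred"
  define R where "R = covT lam T (h spred (u (Suc t)))"
  define E where "E = T (y (Suc t)) - h spred (u (Suc t))"
  define Pp where "Pp = F ** (\<eta> t *\<^sub>R matrix_inv J) ** transpose F
                        + \<alpha> (Suc t) *\<^sub>R (F ** (\<eta> t *\<^sub>R matrix_inv J) ** transpose F)"
  define K where "K = Pp ** transpose H ** matrix_inv (H ** Pp ** transpose H + R)"
  define Jn where "Jn = (1 - \<eta> (Suc t)) *\<^sub>R (transpose (matrix_inv F) ** J ** matrix_inv F)
                        + \<eta> (Suc t) *\<^sub>R (transpose H ** matrix_inv R ** H)"
  define \<theta>n where "\<theta>n = spred + \<eta> (Suc t) *\<^sub>R (matrix_inv Jn *v (transpose H *v (matrix_inv R *v E)))"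
  have spred: "ss (Suc t) = spred" using ss unfolding traj_def spred_def by simp
  have kf_Suc: "kf (Suc t) = (spred + K *v E, (mat 1 - K ** H) ** Pp)"
    using kf by (simp add: Let_def spred_def F_def H_def R_def E_def Pp_def K_def)
  have ng_Suc: "ng (Suc t) = (Phi_inv f u (Suc t) \<theta>n, tensor_of_coord (Suc t) Jn)"
    using ng gamma_eta
    by (simp add: Let_def \<theta>n_def Jn_def Phi_def spred[symmetric] F_def H_def R_def E_def
        coord_tensor_of_coord_Suc[of f u, OF flow_jac_invertible] coord_tensor_fisher coord_covec_score)
  have R: "sym_pos_def R" unfolding R_def by (rule covT_sym_pos_def[OF h_dom[rule_format]])
  have eta_Suc: "1 / \<eta> (Suc t) = (1 / (1 + \<alpha> (Suc t))) * (1 / \<eta> t) + 1"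
    using eta_rec by simp
  note step = fading_memory_ekf_step[OF J R flow_jac_invertible[of t "ss t"] eta alpha_nonneg[rule_format]
      eta_Suc, where H=H]
  have "\<theta>n = spred + K *v E"
    using step(3)[of E] unfolding \<theta>n_def K_def Pp_def Jn_def F_def by simp
  moreover have "\<eta> (Suc t) > 0"
    using fading_memory_step_size(1)[OF eta alpha_nonneg[rule_format] eta_Suc] .
  moreover have "(mat 1 - K ** H) ** Pp = \<eta> (Suc t) *\<^sub>R matrix_inv Jn" and "sym_pos_def Jn"
    using step(1,2) unfolding K_def Pp_def Jn_def F_def by simp_all
  ultimately show ?thesis
    unfolding ongd_tracks_ekf_def ng_Suc kf_Suc
    using Phi_inv_in_traj[of f u, OF flow_bij] Phi_Phi_inv[of f u, OF flow_bij, of "Suc t" \<theta>n]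
    by (auto simp: Phi_def)
qed

lemma ongd_tracks_ekf: "ongd_tracks_ekf t"
  by (induction t) (use ongd_tracks_ekf_0 ongd_tracks_ekf_Suc in auto)

end

theorem theorem5:
  fixes f :: "real^'n \<Rightarrow> 'u::euclidean_space \<Rightarrow> real^'n"
    and h :: "real^'n \<Rightarrow> 'u \<Rightarrow> real^'k"
    and u :: "nat \<Rightarrow> 'u"
    and lam :: "'y measure"
    and T :: "'y \<Rightarrow> real^'k"
    and y :: "nat \<Rightarrow> 'y"
    and \<alpha> \<eta> \<gamma> :: "nat \<Rightarrow> real"
    and s0 :: "real^'n"
    and P0 J0 :: "real^'n^'n"
    and ss0 :: "nat \<Rightarrow> real^'n"
  assumes smooth_f: "smooth_map (\<lambda>(s, v). f s v)"
    and smooth_h: "smooth_map (\<lambda>(s, v). h s v)"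
    and diffeo_f: "\<forall>t\<ge>1. diffeo (\<lambda>s. f s (u t))"
    and expfam: "expfam_stats lam T"
    and h_dom: "\<forall>s v. h s v \<in> mean_dom lam T"
    and alpha_nonneg: "\<forall>t. \<alpha> t \<ge> 0"
    and P0_spd: "sym_pos_def P0"
    and J0_spd: "sym_pos_def J0"
    and ss0_traj: "ss0 \<in> traj f u"
    and ss0_init: "ss0 0 = s0"
    and P0_J0: "P0 = \<eta> 0 *\<^sub>R matrix_inv J0"
    and gamma_eta: "\<forall>t\<ge>1. \<gamma> t = \<eta> t"
    and eta_rec: "\<forall>t\<ge>1. 1 / \<eta> t = (1 / (1 + \<alpha> t)) * (1 / \<eta> (t - 1)) + 1"
  shows "\<forall>t. Phi t (fst (ongd f h u lam T y \<eta> \<gamma> ss0 J0 t)) = fst (ekf f h u lam T y \<alpha> s0 P0 t)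
            \<and> snd (ekf f h u lam T y \<alpha> s0 P0 t)
                = \<eta> t *\<^sub>R matrix_inv (coord_tensor f u t (fst (ongd f h u lam T y \<eta> \<gamma> ss0 J0 t))
                                        (snd (ongd f h u lam T y \<eta> \<gamma> ss0 J0 t)))"
proof -
  have eta0: "\<eta> 0 > 0"
  proof -
    define e where "e = axis (undefined::'n) (1::real)"
    have "e \<noteq> 0" unfolding e_def by (simp add: axis_eq_0_iff)
    then have "0 < e \<bullet> (P0 *v e)" and "0 < e \<bullet> (matrix_inv J0 *v e)"
      using P0_spd sym_pos_def_matrix_inv[OF J0_spd] unfolding sym_pos_def_def by blast+
    then show ?thesis unfolding P0_J0 by (simp add: scaleR_matrix_vector_assoc[symmetric] zero_less_mult_iff)
  qed
  interpret fading_memory_correspondence lam T f h u y \<alpha> \<eta> \<gamma> s0 P0 J0 ss0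
    by unfold_locales (use assms eta0 in \<open>auto simp: exp_family_def\<close>)
  show ?thesis
  proof
    fix t
    obtain ss J where "ng t = (ss, tensor_of_coord t J)" "kf t = (ss t, \<eta> t *\<^sub>R matrix_inv J)"
      using ongd_tracks_ekf unfolding ongd_tracks_ekf_def by blast
    then show "Phi t (fst (ng t)) = fst (kf t) \<and> snd (kf t) = \<eta> t *\<^sub>R matrix_inv (coord_tensor f u t (fst (ng t)) (snd (ng t)))"
      by (simp add: Phi_def coord_tensor_of_coord[of f u, OF flow_jac_invertible])
  qed
qed

end
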